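(* Let $\Lambda:\mathcal{B}(\mathcal{H}_d)\to\mathcal{B}(\mathcal{H}_d)$ be a quantum operation. Then the map $$\Lambda'_{\min}[\varrho]=\sqrt{I-\Lambda^{\dagger}[I]}\,\varrho\,\sqrt{I-\Lambda^{\dagger}[I]}$$ is an extension for $\Lambda$, and any extension $\Lambda'$ for $\Lambda$ has the form $\Lambda'=\Phi\circ\Lambda'_{\min}$ for some quantum channel $\Phi:\mathcal{B}(\mathcal{H}_d)\to\mathcal{B}(\mathcal{H}_d)$.
   Context: $\mathcal{H}_d$ is a Hilbert space of finite dimension $d>1$. A quantum operation is a linear map $\Lambda:\mathcal{B}(\mathcal{H}_d)\to\mathcal{B}(\mathcal{H}_d)$ that is completely positive and trace nonincreasing, equivalently $\Lambda^\dagger[I]\le I$, where $\Lambda^\dagger$ is the dual map defined by $\mathrm{tr}[\Lambda[X]Y]=\mathrm{tr}[X\Lambda^\dagger[Y]]$. A quantum channel is a completely positive trace preserving map ($\Phi^\dagger[I]=I$). A quantum operation $\Lambda'$ is called an extension for the quantum operation $\Lambda$ if $\Lambda+\Lambda'$ is trace preserving. *)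

theory Defs
  imports "Jordan_Normal_Form.Matrix"
begin

text \<open>Operators on H_d are complex d x d matrices (carrier_mat d d).
  Maps B(H_d) -> B(H_d) are functions complex mat => complex mat; only their
  behaviour on carrier_mat d d matters.\<close>

definition mtrace :: "complex mat \<Rightarrow> complex" where
  "mtrace A = (\<Sum>i<dim_row A. A $$ (i, i))"

definition qf :: "complex mat \<Rightarrow> complex vec \<Rightarrow> complex" where
  "qf A v = (\<Sum>i<dim_vec v. \<Sum>j<dim_vec v. cnj (v $ i) * A $$ (i, j) * v $ j)"

definition psd :: "nat \<Rightarrow> complex mat \<Rightarrow> bool" where
  "psd n A \<longleftrightarrow> A \<in> carrier_mat n n \<and>
     (\<forall>v \<in> carrier_vec n. \<exists>r::real. r \<ge> 0 \<and> qf A v = complex_of_real r)"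

definition loewner_le :: "nat \<Rightarrow> complex mat \<Rightarrow> complex mat \<Rightarrow> bool" where
  "loewner_le n A B \<longleftrightarrow> A \<in> carrier_mat n n \<and> B \<in> carrier_mat n n \<and> psd n (B - A)"

definition psd_sqrt :: "nat \<Rightarrow> complex mat \<Rightarrow> complex mat" where
  "psd_sqrt n A = (THE B. psd n B \<and> B * B = A)"

definition linear_map :: "nat \<Rightarrow> (complex mat \<Rightarrow> complex mat) \<Rightarrow> bool" where
  "linear_map d L \<longleftrightarrow>
     (\<forall>X \<in> carrier_mat d d. L X \<in> carrier_mat d d) \<and>
     (\<forall>X \<in> carrier_mat d d. \<forall>Y \<in> carrier_mat d d. L (X + Y) = L X + L Y) \<and>
     (\<forall>X \<in> carrier_mat d d. \<forall>c::complex. L (c \<cdot>\<^sub>m X) = c \<cdot>\<^sub>m L X)"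

definition dual_map :: "nat \<Rightarrow> (complex mat \<Rightarrow> complex mat) \<Rightarrow> complex mat \<Rightarrow> complex mat" where
  "dual_map d L Y = (THE Z. Z \<in> carrier_mat d d \<and>
     (\<forall>X \<in> carrier_mat d d. mtrace (L X * Y) = mtrace (X * Z)))"

text \<open>The (a,b) block (of size d x d) of a (k d) x (k d) matrix, i.e. an element of
  B(C^k \<otimes> H_d) viewed as a k x k block matrix with entries in B(H_d).\<close>
definition block :: "nat \<Rightarrow> complex mat \<Rightarrow> nat \<Rightarrow> nat \<Rightarrow> complex mat" where
  "block d M a b = mat d d (\<lambda>(i, j). M $$ (a * d + i, b * d + j))"

text \<open>id_k \<otimes> L acting on B(C^k \<otimes> H_d): apply L blockwise.\<close>
definition ampliation :: "nat \<Rightarrow> nat \<Rightarrow> (complex mat \<Rightarrow> complex mat) \<Rightarrow> complex mat \<Rightarrow> complex mat" where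
  "ampliation d k L M = mat (k * d) (k * d)
     (\<lambda>(r, s). L (block d M (r div d) (s div d)) $$ (r mod d, s mod d))"

definition completely_positive :: "nat \<Rightarrow> (complex mat \<Rightarrow> complex mat) \<Rightarrow> bool" where
  "completely_positive d L \<longleftrightarrow>
     (\<forall>k::nat. \<forall>M. psd (k * d) M \<longrightarrow> psd (k * d) (ampliation d k L M))"

definition trace_nonincreasing :: "nat \<Rightarrow> (complex mat \<Rightarrow> complex mat) \<Rightarrow> bool" where
  "trace_nonincreasing d L \<longleftrightarrow> loewner_le d (dual_map d L (1\<^sub>m d)) (1\<^sub>m d)"

definition trace_preserving :: "nat \<Rightarrow> (complex mat \<Rightarrow> complex mat) \<Rightarrow> bool" where
  "trace_preserving d L \<longleftrightarrow> (\<forall>X \<in> carrier_mat d d. mtrace (L X) = mtrace X)"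

definition quantum_operation :: "nat \<Rightarrow> (complex mat \<Rightarrow> complex mat) \<Rightarrow> bool" where
  "quantum_operation d L \<longleftrightarrow> linear_map d L \<and> completely_positive d L \<and> trace_nonincreasing d L"

definition quantum_channel :: "nat \<Rightarrow> (complex mat \<Rightarrow> complex mat) \<Rightarrow> bool" where
  "quantum_channel d L \<longleftrightarrow> linear_map d L \<and> completely_positive d L \<and> trace_preserving d L"

definition is_extension :: "nat \<Rightarrow> (complex mat \<Rightarrow> complex mat) \<Rightarrow> (complex mat \<Rightarrow> complex mat) \<Rightarrow> bool" where
  "is_extension d L L' \<longleftrightarrow> quantum_operation d L' \<and> trace_preserving d (\<lambda>X. L X + L' X)"

definition min_extension :: "nat \<Rightarrow> (complex mat \<Rightarrow> complex mat) \<Rightarrow> complex mat \<Rightarrow> complex mat" where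
  "min_extension d L \<rho> =
     (let S = psd_sqrt d (1\<^sub>m d - dual_map d L (1\<^sub>m d)) in S * \<rho> * S)"

end

theory Submission
  imports Defs "Jordan_Normal_Form.Spectral_Radius" "Jordan_Normal_Form.Schur_Decomposition"
begin

text \<open>Write A = \<Lambda>^dagger[I], which is positive because \<Lambda> is, and P = I - A, which is positive
  because \<Lambda> is trace nonincreasing. By the spectral theorem P = U diag(f) U^* with f \<ge> 0, and its
  positive square root is S = U diag(sqrt f) U^*. The congruence X \<mapsto> S X S is completely positive
  with dual S^2 = P, so tr \<Lambda>[X] + tr (S X S) = tr (X A) + tr (X P) = tr X.

  Conversely, if \<Lambda>' is an extension then tr \<Lambda>'[X] = tr (X P). Let Q be the projection onto the
  kernel of P and T the pseudo-inverse of S, so that T S = S T = I - Q. Now \<Lambda>'[Q] is positive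
  with trace tr (Q P) = 0, so it vanishes; complete positivity then kills \<Lambda>'[X Q] and \<Lambda>'[Q X],
  whence \<Lambda>'[\<rho>] = \<Lambda>'[(I - Q) \<rho> (I - Q)]. The channel \<Phi>[X] = \<Lambda>'[T X T] + Q X Q therefore
  satisfies \<Phi>[S \<rho> S] = \<Lambda>'[\<rho>].\<close>

section \<open>Adjoints, traces and positive semidefinite matrices\<close>

lemma mat_adjoint_altdef:
  "mat_adjoint (A :: complex mat) = mat (dim_col A) (dim_row A) (\<lambda>(i, j). cnj (A $$ (j, i)))"
  by (rule eq_matI) (auto simp: mat_adjoint_def mat_of_rows_def)

lemma dim_mat_adjoint [simp]:
  "dim_row (mat_adjoint (A :: complex mat)) = dim_col A"
  "dim_col (mat_adjoint (A :: complex mat)) = dim_row A"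
  by (auto simp: mat_adjoint_altdef)

lemma mat_adjoint_carrier [simp]: "(A :: complex mat) \<in> carrier_mat n m \<Longrightarrow> mat_adjoint A \<in> carrier_mat m n"
  by (auto simp: mat_adjoint_altdef)

lemma index_mat_adjoint [simp]:
  "i < dim_col A \<Longrightarrow> j < dim_row A \<Longrightarrow> mat_adjoint (A :: complex mat) $$ (i, j) = cnj (A $$ (j, i))"
  by (simp add: mat_adjoint_altdef)

lemma mat_adjoint_adjoint [simp]: "mat_adjoint (mat_adjoint (A :: complex mat)) = A"
  by (rule eq_matI) auto

lemma mat_adjoint_mult:
  assumes "(A :: complex mat) \<in> carrier_mat n m" "B \<in> carrier_mat m k"
  shows "mat_adjoint (A * B) = mat_adjoint B * mat_adjoint A"
  by (rule eq_matI) (use assms in \<open>auto simp: scalar_prod_def mult.commute intro!: sum.cong\<close>)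

lemma mat_adjoint_one [simp]: "mat_adjoint (1\<^sub>m n :: complex mat) = 1\<^sub>m n"
  by (rule eq_matI) auto

lemma mat_adjoint_zero [simp]: "mat_adjoint (0\<^sub>m n m :: complex mat) = 0\<^sub>m m n"
  by (rule eq_matI) auto

lemma mat_adjoint_four_block_mat:
  assumes "(A :: complex mat) \<in> carrier_mat n1 m1" "B \<in> carrier_mat n1 m2" "C \<in> carrier_mat n2 m1"
    "D \<in> carrier_mat n2 m2"
  shows "mat_adjoint (four_block_mat A B C D)
       = four_block_mat (mat_adjoint A) (mat_adjoint C) (mat_adjoint B) (mat_adjoint D)"
  by (rule eq_matI) (use assms in auto)

lemma mat_adjoint_minus:
  assumes "(A :: complex mat) \<in> carrier_mat n m" "B \<in> carrier_mat n m"
  shows "mat_adjoint (A - B) = mat_adjoint A - mat_adjoint B"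
  by (rule eq_matI) (use assms in auto)

lemma mat_adjoint_mat_diag: "mat_adjoint (mat_diag n f) = mat_diag n (\<lambda>i. cnj (f i))"
  by (rule eq_matI) (auto simp: mat_diag_def)

lemma cscalar_prod_mat_adjoint:
  assumes "(K :: complex mat) \<in> carrier_mat n m" "v \<in> carrier_vec m" "w \<in> carrier_vec n"
  shows "conjugate v \<bullet> (mat_adjoint K *\<^sub>v w) = conjugate (K *\<^sub>v v) \<bullet> w"
proof -
  have "conjugate v \<bullet> (mat_adjoint K *\<^sub>v w) = (\<Sum>i<m. cnj (v $ i) * (\<Sum>q<n. cnj (K $$ (q, i)) * w $ q))"
    using assms by (auto simp: scalar_prod_def atLeast0LessThan intro!: sum.cong)
  also have "\<dots> = (\<Sum>q<n. (\<Sum>i<m. cnj (K $$ (q, i)) * cnj (v $ i)) * w $ q)"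
    by (simp add: sum_distrib_left sum_distrib_right mult_ac sum.swap[of _ "{..<n}"])
  also have "\<dots> = conjugate (K *\<^sub>v v) \<bullet> w"
    using assms by (auto simp: scalar_prod_def atLeast0LessThan intro!: sum.cong)
  finally show ?thesis .
qed

lemma mat_adjoint_mult_self_eq_0:
  assumes M: "(M :: complex mat) \<in> carrier_mat n m" and MM: "mat_adjoint M * M = 0\<^sub>m m m"
  shows "M = 0\<^sub>m n m"
proof (rule eq_matI)
  fix k j assume "k < dim_row (0\<^sub>m n m :: complex mat)" "j < dim_col (0\<^sub>m n m :: complex mat)"
  hence k: "k < n" and j: "j < m" by auto
  have "col M j \<bullet>c col M j = cnj ((mat_adjoint M * M) $$ (j, j))"
    using M j by (auto simp: scalar_prod_def mult.commute intro!: sum.cong)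
  hence "col M j = 0\<^sub>v n" using MM j M conjugate_square_eq_0_vec[of "col M j" n] by simp
  hence "col M j $ k = 0" using k by simp
  thus "M $$ (k, j) = 0\<^sub>m n m $$ (k, j)" using M j k by simp
qed (use M in auto)

lemma mtrace_carrier: "A \<in> carrier_mat n n \<Longrightarrow> mtrace A = (\<Sum>i<n. A $$ (i, i))"
  by (simp add: mtrace_def)

lemma mtrace_mult_comm:
  assumes "A \<in> carrier_mat n m" "B \<in> carrier_mat m n"
  shows "mtrace (A * B) = mtrace (B * A)"
proof -
  have "mtrace (A * B) = (\<Sum>i<n. \<Sum>k<m. A $$ (i, k) * B $$ (k, i))"
    using assms by (auto simp: mtrace_def scalar_prod_def atLeast0LessThan intro!: sum.cong)
  also have "\<dots> = (\<Sum>k<m. \<Sum>i<n. B $$ (k, i) * A $$ (i, k))"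
    by (subst sum.swap) (simp add: mult.commute)
  also have "\<dots> = mtrace (B * A)"
    using assms by (auto simp: mtrace_def scalar_prod_def atLeast0LessThan intro!: sum.cong)
  finally show ?thesis .
qed

lemma mtrace_add: "A \<in> carrier_mat n n \<Longrightarrow> B \<in> carrier_mat n n \<Longrightarrow> mtrace (A + B) = mtrace A + mtrace B"
  by (simp add: mtrace_def sum.distrib)

lemma mtrace_minus: "A \<in> carrier_mat n n \<Longrightarrow> B \<in> carrier_mat n n \<Longrightarrow> mtrace (A - B) = mtrace A - mtrace B"
  by (simp add: mtrace_def sum_subtractf)

lemma mtrace_smult: "A \<in> carrier_mat n n \<Longrightarrow> mtrace (c \<cdot>\<^sub>m A) = c * mtrace A"
  by (simp add: mtrace_def sum_distrib_left)

lemma mtrace_congruence: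
  assumes K: "K \<in> carrier_mat d d" and X: "X \<in> carrier_mat d d" and Y: "Y \<in> carrier_mat d d"
  shows "mtrace (mat_adjoint K * X * K * Y) = mtrace (X * (K * Y * mat_adjoint K))"
proof -
  have "mtrace (mat_adjoint K * X * K * Y) = mtrace (mat_adjoint K * (X * K * Y))"
    using assms by (simp add: assoc_mult_mat[of _ d d _ d _ d])
  also have "\<dots> = mtrace (X * K * Y * mat_adjoint K)"
    using assms by (intro mtrace_mult_comm[of _ d d]) auto
  also have "\<dots> = mtrace (X * (K * Y * mat_adjoint K))"
    using assms by (simp add: assoc_mult_mat[of _ d d _ d _ d])
  finally show ?thesis .
qed

lemma mtrace_mult_one_minus:
  assumes X: "X \<in> carrier_mat d d" and G: "G \<in> carrier_mat d d"
  shows "mtrace (X * (1\<^sub>m d - G)) = mtrace X - mtrace (X * G)"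
proof -
  have "X * (1\<^sub>m d - G) = X - X * G" using mult_minus_distrib_mat[OF X one_carrier_mat G] X by simp
  thus ?thesis using X G by (simp add: mtrace_minus[of _ d] mult_carrier_mat[of _ d d])
qed

lemma qf_eq_scalar_prod:
  "A \<in> carrier_mat n n \<Longrightarrow> v \<in> carrier_vec n \<Longrightarrow> qf A v = conjugate v \<bullet> (A *\<^sub>v v)"
  by (auto simp: qf_def scalar_prod_def sum_distrib_left mult.assoc intro!: sum.cong)

lemma qf_congruence:
  assumes K: "K \<in> carrier_mat n m" and M: "M \<in> carrier_mat n n" and v: "v \<in> carrier_vec m"
  shows "qf (mat_adjoint K * M * K) v = qf M (K *\<^sub>v v)"
proof -
  have "(mat_adjoint K * M * K) *\<^sub>v v = (mat_adjoint K * M) *\<^sub>v (K *\<^sub>v v)"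
    using assms by (intro assoc_mult_mat_vec[of _ m n _ m]) auto
  also have "\<dots> = mat_adjoint K *\<^sub>v (M *\<^sub>v (K *\<^sub>v v))"
    using assms by (intro assoc_mult_mat_vec[of _ m n _ n]) auto
  finally have mult: "(mat_adjoint K * M * K) *\<^sub>v v = mat_adjoint K *\<^sub>v (M *\<^sub>v (K *\<^sub>v v))" .
  have "qf (mat_adjoint K * M * K) v = conjugate v \<bullet> ((mat_adjoint K * M * K) *\<^sub>v v)"
    using assms by (intro qf_eq_scalar_prod) auto
  also have "\<dots> = conjugate (K *\<^sub>v v) \<bullet> (M *\<^sub>v (K *\<^sub>v v))"
    unfolding mult using assms by (intro cscalar_prod_mat_adjoint) auto
  also have "\<dots> = qf M (K *\<^sub>v v)"
    using assms by (intro qf_eq_scalar_prod[symmetric]) auto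
  finally show ?thesis .
qed

lemma qf_add:
  "A \<in> carrier_mat n n \<Longrightarrow> B \<in> carrier_mat n n \<Longrightarrow> v \<in> carrier_vec n \<Longrightarrow> qf (A + B) v = qf A v + qf B v"
  by (auto simp: qf_def algebra_simps sum.distrib)

lemma psd_iff: "psd n A \<longleftrightarrow> A \<in> carrier_mat n n \<and> (\<forall>v \<in> carrier_vec n. 0 \<le> qf A v)"
proof -
  have "(\<exists>r::real. r \<ge> 0 \<and> z = complex_of_real r) \<longleftrightarrow> 0 \<le> z" for z
    by (auto simp: less_eq_complex_def complex_eq_iff intro!: exI[of _ "Re z"])
  thus ?thesis unfolding psd_def by simp
qed

lemma psd_carrier: "psd n A \<Longrightarrow> A \<in> carrier_mat n n"
  by (simp add: psd_iff)

lemma psd_congruence: "psd n M \<Longrightarrow> K \<in> carrier_mat n m \<Longrightarrow> psd m (mat_adjoint K * M * K)"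
  by (auto simp: psd_iff qf_congruence)

lemma psd_add: "psd n A \<Longrightarrow> psd n B \<Longrightarrow> psd n (A + B)"
  by (auto simp: psd_iff qf_add)

lemma psd_mat_diag:
  assumes "\<And>i. i < n \<Longrightarrow> 0 \<le> f i"
  shows "psd n (mat_diag n f)"
  unfolding psd_iff
proof (intro conjI ballI)
  fix v :: "complex vec" assume v: "v \<in> carrier_vec n"
  have "qf (mat_diag n f) v = (\<Sum>k<n. \<Sum>l<n. cnj (v $ k) * mat_diag n f $$ (k, l) * v $ l)"
    using v by (simp add: qf_def)
  also have "\<dots> = (\<Sum>k<n. \<Sum>l<n. if k = l then f k * (cnj (v $ k) * v $ k) else 0)"
    by (intro sum.cong refl) (auto simp: mat_diag_def)
  also have "\<dots> = (\<Sum>k<n. f k * (cnj (v $ k) * v $ k))"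
    by simp
  also have "0 \<le> \<dots>"
  proof (rule sum_nonneg, rule mult_nonneg_nonneg)
    fix k assume "k \<in> {..<n}"
    thus "0 \<le> f k" using assms by simp
    show "0 \<le> cnj (v $ k) * v $ k" using conjugate_square_positive[of "v $ k"] by (simp add: mult.commute)
  qed
  finally show "0 \<le> qf (mat_diag n f) v" .
qed simp

lemma qf_two_coords:
  fixes a b :: complex
  assumes A: "A \<in> carrier_mat n n" and ij: "i < n" "j < n" "i \<noteq> j"
  defines "v \<equiv> vec n (\<lambda>k. if k = i then a else if k = j then b else 0)"
  shows "qf A v = cnj a * a * A $$ (i, i) + cnj a * b * A $$ (i, j)
                + cnj b * a * A $$ (j, i) + cnj b * b * A $$ (j, j)"
proof -
  have supp: "(\<Sum>k<n. g k) = (\<Sum>k\<in>{i, j}. g k)" if "\<And>k. k < n \<Longrightarrow> k \<noteq> i \<Longrightarrow> k \<noteq> j \<Longrightarrow> g k = 0"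
    for g :: "nat \<Rightarrow> complex"
    using ij that by (intro sum.mono_neutral_right) auto
  have right: "(\<Sum>l<n. g l * v $ l) = g i * a + g j * b" for g
    using ij by (subst supp) (auto simp: v_def)
  have left: "(\<Sum>k<n. cnj (v $ k) * g k) = cnj a * g i + cnj b * g j" for g
    using ij by (subst supp) (auto simp: v_def)
  have dim: "dim_vec v = n" by (simp add: v_def)
  have "qf A v = (\<Sum>k<n. cnj (v $ k) * (A $$ (k, i) * a + A $$ (k, j) * b))"
    unfolding qf_def dim right by (simp add: algebra_simps)
  also have "\<dots> = cnj a * (A $$ (i, i) * a + A $$ (i, j) * b) + cnj b * (A $$ (j, i) * a + A $$ (j, j) * b)"
    by (rule left)
  finally show ?thesis by (simp add: algebra_simps)
qed

lemma psd_diag_nonneg: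
  assumes "psd n A" "i < n"
  shows "0 \<le> A $$ (i, i)"
proof -
  have "conjugate (unit_vec n i) = (unit_vec n i :: complex vec)"
    by (rule eq_vecI) (auto simp: unit_vec_def)
  hence "qf A (unit_vec n i) = A $$ (i, i)"
    using assms psd_carrier[OF assms(1)] by (simp add: qf_eq_scalar_prod)
  thus ?thesis using assms by (metis psd_iff unit_vec_carrier)
qed

lemma affine_nonneg_imp_slope_eq_0:
  assumes "\<And>t::real. 0 \<le> complex_of_real t * c + z"
  shows "c = 0"
proof -
  from assms[of 0] have z: "Im z = 0" by (auto simp: less_eq_complex_def)
  from assms[of 1] z have "Im c = 0" by (auto simp: less_eq_complex_def)
  moreover have "Re c = 0"
  proof (rule ccontr)
    assume "Re c \<noteq> 0"
    define t where "t = - (Re z + 1) / Re c"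
    from assms[of t] have "0 \<le> t * Re c + Re z" by (auto simp: less_eq_complex_def)
    also have "t * Re c = - (Re z + 1)" using \<open>Re c \<noteq> 0\<close> by (simp add: t_def)
    finally show False by simp
  qed
  ultimately show ?thesis by (simp add: complex_eq_iff)
qed

lemma psd_hermitian:
  assumes psd: "psd n A"
  shows "mat_adjoint A = A"
proof (rule eq_matI)
  have A: "A \<in> carrier_mat n n" using psd by (rule psd_carrier)
  fix i j assume "i < dim_row A" "j < dim_col A"
  hence i: "i < n" and j: "j < n" using A by auto
  show "mat_adjoint A $$ (i, j) = A $$ (i, j)"
  proof (cases "i = j")
    case True
    with psd_diag_nonneg[OF psd i] show ?thesis
      using A i by (auto simp: less_eq_complex_def complex_eq_iff)
  next
    case False
    let ?v = "\<lambda>a b. vec n (\<lambda>k. if k = i then a else if k = j then b else 0)"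
    have real_diag: "Im (A $$ (i, i)) = 0" "Im (A $$ (j, j)) = 0"
      using psd_diag_nonneg[OF psd i] psd_diag_nonneg[OF psd j] by (auto simp: less_eq_complex_def)
    have "0 \<le> qf A (?v 1 1)" "0 \<le> qf A (?v 1 \<i>)" using psd by (auto simp: psd_iff)
    hence "Im (A $$ (i, j)) + Im (A $$ (j, i)) = 0" "Re (A $$ (i, j)) - Re (A $$ (j, i)) = 0"
      using qf_two_coords[OF A i j False, of 1 1] qf_two_coords[OF A i j False, of 1 \<i>] real_diag
      by (auto simp: less_eq_complex_def algebra_simps)
    thus ?thesis using A i j by (auto simp: complex_eq_iff)
  qed
qed (use psd_carrier[OF assms] in auto)

lemma psd_diag_eq_0_imp_row_col_eq_0:
  assumes psd: "psd n A" and i: "i < n" and ii: "A $$ (i, i) = 0" and j: "j < n"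
  shows "A $$ (i, j) = 0 \<and> A $$ (j, i) = 0"
proof (cases "i = j")
  case False
  have A: "A \<in> carrier_mat n n" using psd by (rule psd_carrier)
  let ?v = "\<lambda>a. vec n (\<lambda>k. if k = i then a else if k = j then 1 else 0)"
  have q: "0 \<le> qf A (?v a)" for a using psd by (auto simp: psd_iff)
  have "A $$ (i, j) + A $$ (j, i) = 0"
  proof (rule affine_nonneg_imp_slope_eq_0[where z = "A $$ (j, j)"])
    fix t :: real
    show "0 \<le> complex_of_real t * (A $$ (i, j) + A $$ (j, i)) + A $$ (j, j)"
      using q[of "complex_of_real t"] qf_two_coords[OF A i j False, of "complex_of_real t" 1] ii
      by (simp add: algebra_simps)
  qed
  moreover have "\<i> * (A $$ (j, i) - A $$ (i, j)) = 0"
  proof (rule affine_nonneg_imp_slope_eq_0[where z = "A $$ (j, j)"])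
    fix t :: real
    show "0 \<le> complex_of_real t * (\<i> * (A $$ (j, i) - A $$ (i, j))) + A $$ (j, j)"
      using q[of "\<i> * complex_of_real t"] qf_two_coords[OF A i j False, of "\<i> * complex_of_real t" 1] ii
      by (simp add: algebra_simps)
  qed
  ultimately show ?thesis by (simp add: algebra_simps)
qed (use ii in simp)

lemma mtrace_psd_nonneg: "psd n A \<Longrightarrow> 0 \<le> mtrace A"
  by (auto simp: mtrace_carrier[OF psd_carrier] intro!: sum_nonneg psd_diag_nonneg)

lemma psd_mtrace_eq_0:
  assumes psd: "psd n A" and tr: "mtrace A = 0"
  shows "A = 0\<^sub>m n n"
proof (rule eq_matI)
  have A: "A \<in> carrier_mat n n" using psd by (rule psd_carrier)
  have diag: "A $$ (i, i) = 0" if "i < n" for i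
  proof -
    have "(\<Sum>i<n. A $$ (i, i)) = 0" using tr A by (simp add: mtrace_def)
    thus ?thesis using that psd_diag_nonneg[OF psd] by (subst (asm) sum_nonneg_eq_0_iff) auto
  qed
  fix i j assume "i < dim_row (0\<^sub>m n n :: complex mat)" "j < dim_col (0\<^sub>m n n :: complex mat)"
  hence i: "i < n" and j: "j < n" by auto
  show "A $$ (i, j) = 0\<^sub>m n n $$ (i, j)"
    using psd_diag_eq_0_imp_row_col_eq_0[OF psd i diag[OF i] j] i j by simp
qed (use psd_carrier[OF psd] in auto)

lemma psd_add_eq_0:
  assumes "psd n A" "psd n B" "A + B = 0\<^sub>m n n"
  shows "A = 0\<^sub>m n n" "B = 0\<^sub>m n n"
proof -
  have "mtrace A + mtrace B = 0"
    using assms mtrace_add[of A n B] by (simp add: psd_carrier mtrace_def)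
  hence "mtrace A = 0" "mtrace B = 0"
    using mtrace_psd_nonneg[OF assms(1)] mtrace_psd_nonneg[OF assms(2)] by (simp_all add: add_nonneg_eq_0_iff)
  thus "A = 0\<^sub>m n n" "B = 0\<^sub>m n n" using assms psd_mtrace_eq_0 by auto
qed

definition rank_one :: "complex vec \<Rightarrow> complex mat" where
  "rank_one v = mat (dim_vec v) (dim_vec v) (\<lambda>(i, j). v $ i * cnj (v $ j))"

lemma psd_rank_one:
  assumes v: "v \<in> carrier_vec n"
  shows "psd n (rank_one v)"
  unfolding psd_iff
proof (intro conjI ballI)
  show "rank_one v \<in> carrier_mat n n" using v by (simp add: rank_one_def)
  fix w :: "complex vec" assume w: "w \<in> carrier_vec n"
  define s where "s = (\<Sum>j<n. cnj (v $ j) * w $ j)"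
  have "qf (rank_one v) w = (\<Sum>i<n. \<Sum>j<n. (cnj (w $ i) * v $ i) * (cnj (v $ j) * w $ j))"
    using v w by (auto simp: qf_def rank_one_def mult_ac intro!: sum.cong)
  also have "\<dots> = cnj s * s"
    unfolding s_def cnj_sum sum_product by (auto simp: mult_ac intro!: sum.cong)
  also have "0 \<le> \<dots>"
    using conjugate_square_positive[of s] by (simp add: mult.commute)
  finally show "0 \<le> qf (rank_one v) w" .
qed

lemma mtrace_rank_one_mult:
  assumes "Z \<in> carrier_mat n n" "v \<in> carrier_vec n"
  shows "mtrace (rank_one v * Z) = qf Z v"
proof -
  have "mtrace (rank_one v * Z) = (\<Sum>i<n. \<Sum>k<n. v $ i * cnj (v $ k) * Z $$ (k, i))"
    using assms by (auto simp: mtrace_def rank_one_def scalar_prod_def atLeast0LessThan intro!: sum.cong)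
  also have "\<dots> = (\<Sum>k<n. \<Sum>i<n. cnj (v $ k) * Z $$ (k, i) * v $ i)"
    by (subst sum.swap) (simp add: mult_ac)
  finally show ?thesis using assms by (simp add: qf_def)
qed

section \<open>Unitary matrices and the spectral theorem\<close>

definition unitary :: "nat \<Rightarrow> complex mat \<Rightarrow> bool" where
  "unitary n U \<longleftrightarrow> U \<in> carrier_mat n n \<and> mat_adjoint U * U = 1\<^sub>m n \<and> U * mat_adjoint U = 1\<^sub>m n"

lemma unitary_carrier: "unitary n U \<Longrightarrow> U \<in> carrier_mat n n"
  by (simp add: unitary_def)

lemma unitaryI: "U \<in> carrier_mat n n \<Longrightarrow> mat_adjoint U * U = 1\<^sub>m n \<Longrightarrow> unitary n U"
  using mat_mult_left_right_inverse[of "mat_adjoint U" n U] by (auto simp: unitary_def)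

lemma unitary_mult:
  assumes U: "unitary n U" and V: "unitary n V"
  shows "unitary n (U * V)"
proof (rule unitaryI)
  have [simp]: "U \<in> carrier_mat n n" "V \<in> carrier_mat n n"
    using U V by (auto simp: unitary_def)
  show "U * V \<in> carrier_mat n n" by (simp add: mult_carrier_mat[of _ n n _ n])
  have "mat_adjoint (U * V) * (U * V) = mat_adjoint V * mat_adjoint U * (U * V)"
    by (simp add: mat_adjoint_mult[of U n n V n])
  also have "\<dots> = mat_adjoint V * ((mat_adjoint U * U) * V)"
    by (simp add: assoc_mult_mat[of _ n n _ n _ n] mult_carrier_mat[of _ n n _ n])
  also have "\<dots> = 1\<^sub>m n" using U V by (simp add: unitary_def left_mult_one_mat[of V n n])
  finally show "mat_adjoint (U * V) * (U * V) = 1\<^sub>m n" .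
qed

lemma unitary_conj_cancel:
  assumes W: "unitary n W" and A: "A \<in> carrier_mat n n"
  shows "W * (mat_adjoint W * A * W) * mat_adjoint W = A"
proof -
  have Wc: "W \<in> carrier_mat n n" using W by (rule unitary_carrier)
  have "W * (mat_adjoint W * A * W) * mat_adjoint W = (W * mat_adjoint W) * A * (W * mat_adjoint W)"
    using Wc A by (simp add: assoc_mult_mat[of _ n n _ n _ n] mult_carrier_mat[of _ n n _ n])
  thus ?thesis using W A by (simp add: unitary_def)
qed

lemma unitary_adjoint_conj_cancel:
  assumes W: "unitary n W" and A: "A \<in> carrier_mat n n"
  shows "mat_adjoint W * (W * A * mat_adjoint W) * W = A"
  using unitary_conj_cancel[of n "mat_adjoint W" A] W A unitary_carrier[OF W]
  by (simp add: unitary_def)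

definition normalize_vec :: "complex vec \<Rightarrow> complex vec" where
  "normalize_vec w = complex_of_real (1 / sqrt (Re (w \<bullet>c w))) \<cdot>\<^sub>v w"

lemma normalize_vec_corthogonal:
  assumes ws: "set ws \<subseteq> carrier_vec n" "corthogonal ws" and ij: "i < length ws" "j < length ws"
  shows "normalize_vec (ws ! j) \<bullet>c normalize_vec (ws ! i) = (if i = j then 1 else 0)"
proof -
  have w: "ws ! i \<in> carrier_vec n" "ws ! j \<in> carrier_vec n" using ws ij by auto
  have "ws ! i \<noteq> 0\<^sub>v n" using corthogonalD[OF ws(2) ij(1) ij(1)] w by auto
  hence "0 < ws ! i \<bullet>c ws ! i" using w by simp
  hence sq: "ws ! i \<bullet>c ws ! i = complex_of_real (Re (ws ! i \<bullet>c ws ! i))" "0 < Re (ws ! i \<bullet>c ws ! i)"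
    by (auto simp: less_complex_def complex_eq_iff)
  have "normalize_vec (ws ! j) \<bullet>c normalize_vec (ws ! i) = complex_of_real (1 / sqrt (Re (ws ! j \<bullet>c ws ! j)))
      * complex_of_real (1 / sqrt (Re (ws ! i \<bullet>c ws ! i))) * (ws ! j \<bullet>c ws ! i)"
    using w by (simp add: normalize_vec_def conjugate_smult_vec)
  also have "\<dots> = (if i = j then 1 else 0)"
    using sq corthogonalD[OF ws(2) ij(2) ij(1)]
    by (auto simp flip: of_real_mult simp: real_sqrt_mult[symmetric])
  finally show ?thesis .
qed

lemma unitary_mat_of_cols:
  fixes us :: "complex vec list"
  assumes us: "length us = n" "set us \<subseteq> carrier_vec n"
    and orthonormal: "\<And>i j. i < n \<Longrightarrow> j < n \<Longrightarrow> us ! j \<bullet>c us ! i = (if i = j then 1 else 0)"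
  shows "unitary n (mat_of_cols n us)"
proof (rule unitaryI)
  let ?W = "mat_of_cols n us"
  show W: "?W \<in> carrier_mat n n" using mat_of_cols_carrier(1)[of n us] us by simp
  show "mat_adjoint ?W * ?W = 1\<^sub>m n"
  proof (rule eq_matI)
    fix i j assume "i < dim_row (1\<^sub>m n :: complex mat)" "j < dim_col (1\<^sub>m n :: complex mat)"
    hence i: "i < n" and j: "j < n" by auto
    have "(mat_adjoint ?W * ?W) $$ (i, j) = (\<Sum>k<n. cnj (?W $$ (k, i)) * ?W $$ (k, j))"
      using W us i j by (simp add: scalar_prod_def atLeast0LessThan)
    moreover have "us ! i \<in> carrier_vec n" "us ! j \<in> carrier_vec n" using us i j by auto
    hence "(\<Sum>k<n. cnj (?W $$ (k, i)) * ?W $$ (k, j)) = us ! j \<bullet>c us ! i"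
      using us(1) i j by (auto simp: mat_of_cols_index scalar_prod_def atLeast0LessThan mult.commute intro!: sum.cong)
    ultimately show "(mat_adjoint ?W * ?W) $$ (i, j) = 1\<^sub>m n $$ (i, j)" using orthonormal[OF i j] i j by simp
  qed (use W in auto)
qed

lemma unitary_with_first_col:
  assumes v: "v \<in> carrier_vec n" and v0: "v \<noteq> 0\<^sub>v n"
  shows "\<exists>W c. unitary n W \<and> col W 0 = c \<cdot>\<^sub>v v"
proof -
  have n: "0 < n" using v v0 by (cases n) auto
  interpret cof_vec_space n "TYPE(complex)" .
  obtain vs where b: "basis_completion v = v # vs" by (simp add: basis_completion_def Let_def)
  define ws where "ws = gram_schmidt n (basis_completion v)"
  have ws: "set ws \<subseteq> carrier_vec n" "corthogonal ws" "length ws = n"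
    using gram_schmidt_result[OF basis_completion(2,4,5)[OF v v0] ws_def] basis_completion(6)[OF v v0]
    by auto
  have ws0: "ws ! 0 = v" using gram_schmidt_hd[OF v, of vs] ws(3) n
    unfolding ws_def b by (metis hd_conv_nth list.size(3) not_less0)
  define us where "us = map normalize_vec ws"
  have "unitary n (mat_of_cols n us)"
    using ws normalize_vec_corthogonal[OF ws(1,2)] by (intro unitary_mat_of_cols) (auto simp: us_def normalize_vec_def)
  moreover have "col (mat_of_cols n us) 0 = normalize_vec v"
    using n ws ws0 by (subst col_mat_of_cols) (auto simp: us_def normalize_vec_def)
  ultimately show ?thesis unfolding normalize_vec_def by blast
qed

lemma four_block_diag_mult:
  assumes "A1 \<in> carrier_mat k k" "D1 \<in> carrier_mat m m" "A2 \<in> carrier_mat k k" "D2 \<in> carrier_mat m m"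
  shows "four_block_mat A1 (0\<^sub>m k m) (0\<^sub>m m k) D1 * four_block_mat A2 (0\<^sub>m k m) (0\<^sub>m m k) D2
       = four_block_mat (A1 * A2) (0\<^sub>m k m) (0\<^sub>m m k) (D1 * (D2 :: complex mat))"
  using assms by (subst mult_four_block_mat[of _ k k _ m _ m]) auto

lemma unitary_four_block_diag:
  assumes V: "unitary m V"
  shows "unitary (Suc m) (four_block_mat (1\<^sub>m 1) (0\<^sub>m 1 m) (0\<^sub>m m 1) V)"
proof (rule unitaryI)
  have Vc: "V \<in> carrier_mat m m" using V by (rule unitary_carrier)
  show "four_block_mat (1\<^sub>m 1) (0\<^sub>m 1 m) (0\<^sub>m m 1) V \<in> carrier_mat (Suc m) (Suc m)"
    using Vc by auto
  show "mat_adjoint (four_block_mat (1\<^sub>m 1) (0\<^sub>m 1 m) (0\<^sub>m m 1) V) * four_block_mat (1\<^sub>m 1) (0\<^sub>m 1 m) (0\<^sub>m m 1) V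
      = 1\<^sub>m (Suc m)"
    using V Vc by (simp add: mat_adjoint_four_block_mat[of _ 1 1 _ m _ m] four_block_diag_mult unitary_def)
qed

lemma mat_diag_Suc:
  "mat_diag (Suc m) f = four_block_mat (mat 1 1 (\<lambda>_. f 0)) (0\<^sub>m 1 m) (0\<^sub>m m 1) (mat_diag m (\<lambda>i. f (Suc i)))"
  by (rule eq_matI) (auto simp: mat_diag_def)

lemma hermitian_unitary_conj:
  assumes A: "(A :: complex mat) \<in> carrier_mat n n" "mat_adjoint A = A" and W: "W \<in> carrier_mat n n"
  shows "mat_adjoint (mat_adjoint W * A * W) = mat_adjoint W * A * W"
proof -
  have "mat_adjoint (mat_adjoint W * A * W) = mat_adjoint W * mat_adjoint (mat_adjoint W * A)"
    using A W by (intro mat_adjoint_mult[of _ n n]) (simp_all add: mult_carrier_mat[of _ n n])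
  also have "mat_adjoint (mat_adjoint W * A) = A * W"
    using A W by (simp add: mat_adjoint_mult[of _ n n])
  finally show ?thesis using A W by (simp add: assoc_mult_mat[of _ n n _ n _ n])
qed

lemma col_unitary_conj_eigenvector:
  assumes A: "A \<in> carrier_mat n n" and W: "unitary n W" and n: "0 < n"
    and ev: "A *\<^sub>v col W 0 = e \<cdot>\<^sub>v col W 0"
  shows "col (mat_adjoint W * A * W) 0 = e \<cdot>\<^sub>v unit_vec n 0"
proof -
  have Wc: "W \<in> carrier_mat n n" using W by (rule unitary_carrier)
  have cW: "col W 0 \<in> carrier_vec n" using Wc by (simp add: carrier_vecI)
  hence "col (mat_adjoint W * A * W) 0 = mat_adjoint W *\<^sub>v (A *\<^sub>v col W 0)"
    using A Wc n by (simp add: col_mult2[of _ n n] assoc_mult_mat_vec[of _ n n _ n] mult_carrier_mat[of _ n n])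
  also have "\<dots> = e \<cdot>\<^sub>v col (mat_adjoint W * W) 0"
    using Wc cW n by (simp add: ev mult_mat_vec[of _ n n] col_mult2[of _ n n])
  also have "mat_adjoint W * W = 1\<^sub>m n" using W by (simp add: unitary_def)
  finally show ?thesis using n by simp
qed

lemma hermitian_first_col_block:
  assumes A: "(A :: complex mat) \<in> carrier_mat (Suc m) (Suc m)" "mat_adjoint A = A"
    and col_eq: "col A 0 = e \<cdot>\<^sub>v unit_vec (Suc m) 0"
  obtains B where "B \<in> carrier_mat m m" "mat_adjoint B = B"
    "A = four_block_mat (mat 1 1 (\<lambda>_. e)) (0\<^sub>m 1 m) (0\<^sub>m m 1) B"
proof -
  let ?n = "Suc m"
  have herm: "A $$ (i, j) = cnj (A $$ (j, i))" if "i < ?n" "j < ?n" for i j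
    using A that by (metis carrier_matD index_mat_adjoint)
  have col0: "A $$ (i, 0) = (if i = 0 then e else 0)" if "i < ?n" for i
  proof -
    have "A $$ (i, 0) = col A 0 $ i" using A that by simp
    thus ?thesis using col_eq that by simp
  qed
  have a00: "A $$ (0, 0) = e" using col0[of 0] by simp
  have row0: "A $$ (0, j) = (if j = 0 then e else 0)" if "j < ?n" for j
  proof (cases "j = 0")
    case False
    thus ?thesis using herm[of 0 j] col0[of j] that by simp
  qed (simp add: a00)
  define B where "B = mat m m (\<lambda>(i, j). A $$ (Suc i, Suc j))"
  have "B \<in> carrier_mat m m" by (simp add: B_def)
  moreover have "mat_adjoint B = B"
  proof (rule eq_matI)
    fix i j assume "i < dim_row B" "j < dim_col B"
    thus "mat_adjoint B $$ (i, j) = B $$ (i, j)" using herm[of "Suc j" "Suc i"] by (simp add: B_def)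
  qed (simp_all add: B_def)
  moreover have "A = four_block_mat (mat 1 1 (\<lambda>_. e)) (0\<^sub>m 1 m) (0\<^sub>m m 1) B"
  proof (rule eq_matI)
    fix i j assume "i < dim_row (four_block_mat (mat 1 1 (\<lambda>_. e)) (0\<^sub>m 1 m) (0\<^sub>m m 1) B)"
      "j < dim_col (four_block_mat (mat 1 1 (\<lambda>_. e)) (0\<^sub>m 1 m) (0\<^sub>m m 1) B)"
    hence i: "i < ?n" and j: "j < ?n" by (auto simp: B_def)
    show "A $$ (i, j) = four_block_mat (mat 1 1 (\<lambda>_. e)) (0\<^sub>m 1 m) (0\<^sub>m m 1) B $$ (i, j)"
      using col0[OF i] row0[OF j] i j by (cases i; cases j) (auto simp: B_def)
  qed (use A in \<open>auto simp: B_def\<close>)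
  ultimately show thesis using that by blast
qed

lemma unitary_diagonalization_step:
  assumes A: "A \<in> carrier_mat (Suc m) (Suc m)" and W: "unitary (Suc m) W" and V: "unitary m V"
    and WAW: "mat_adjoint W * A * W
      = four_block_mat (mat 1 1 (\<lambda>_. e)) (0\<^sub>m 1 m) (0\<^sub>m m 1) (V * mat_diag m g * mat_adjoint V)"
  shows "\<exists>U f. unitary (Suc m) U \<and> A = U * mat_diag (Suc m) f * mat_adjoint U"
proof -
  let ?n = "Suc m"
  have Wc: "W \<in> carrier_mat ?n ?n" and Vc: "V \<in> carrier_mat m m" using W V by (simp_all add: unitary_carrier)
  define V' where "V' = four_block_mat (1\<^sub>m 1) (0\<^sub>m 1 m) (0\<^sub>m m 1) V"
  define f where "f i = (if i = 0 then e else g (i - 1))" for i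
  have V'c: "V' \<in> carrier_mat ?n ?n" using Vc by (auto simp: V'_def)
  have "V' * mat_diag ?n f * mat_adjoint V' = mat_adjoint W * A * W"
    unfolding WAW V'_def mat_diag_Suc using Vc
    by (simp add: f_def mat_adjoint_four_block_mat[of _ 1 1 _ m _ m] four_block_diag_mult)
  hence "A = W * (V' * mat_diag ?n f * mat_adjoint V') * mat_adjoint W"
    using unitary_conj_cancel[OF W A] by simp
  also have "\<dots> = (W * V') * mat_diag ?n f * mat_adjoint (W * V')"
    using Wc V'c by (simp add: mat_adjoint_mult[of W ?n ?n V' ?n] assoc_mult_mat[of _ ?n ?n _ ?n _ ?n]
        mult_carrier_mat[of _ ?n ?n _ ?n])
  finally show ?thesis
    using unitary_mult[OF W unitary_four_block_diag[OF V]] unfolding V'_def by blast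
qed

theorem hermitian_spectral:
  assumes "A \<in> carrier_mat n n" "mat_adjoint A = A"
  shows "\<exists>U f. unitary n U \<and> A = U * mat_diag n f * mat_adjoint U"
  using assms
proof (induction n arbitrary: A)
  case 0
  have "unitary 0 (1\<^sub>m 0)" by (simp add: unitary_def)
  moreover have "A = 1\<^sub>m 0 * mat_diag 0 f * mat_adjoint (1\<^sub>m 0)" for f
    using 0 by (intro eq_matI) auto
  ultimately show ?case by blast
next
  case (Suc m A)
  let ?n = "Suc m"
  obtain e where "e \<in> spectrum A" using spectrum_non_empty[OF Suc.prems(1)] by blast
  then obtain v where v: "v \<in> carrier_vec ?n" "v \<noteq> 0\<^sub>v ?n" and ev: "A *\<^sub>v v = e \<cdot>\<^sub>v v"
    using Suc.prems(1) unfolding spectrum_def eigenvalue_def eigenvector_def by auto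
  obtain W c where W: "unitary ?n W" and Wv: "col W 0 = c \<cdot>\<^sub>v v"
    using unitary_with_first_col[OF v] by blast
  have Wc: "W \<in> carrier_mat ?n ?n" using W by (rule unitary_carrier)
  have "A *\<^sub>v col W 0 = e \<cdot>\<^sub>v col W 0"
    using Suc.prems(1) v by (simp add: Wv ev mult_mat_vec smult_smult_assoc mult.commute)
  hence col: "col (mat_adjoint W * A * W) 0 = e \<cdot>\<^sub>v unit_vec ?n 0"
    using col_unitary_conj_eigenvector[OF Suc.prems(1) W] by simp
  have "mat_adjoint W * A * W \<in> carrier_mat ?n ?n"
    using Suc.prems(1) Wc by (simp add: mult_carrier_mat[of _ ?n ?n])
  then obtain B where B: "B \<in> carrier_mat m m" "mat_adjoint B = B"
    and WAW: "mat_adjoint W * A * W = four_block_mat (mat 1 1 (\<lambda>_. e)) (0\<^sub>m 1 m) (0\<^sub>m m 1) B"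
    using hermitian_first_col_block[OF _ hermitian_unitary_conj[OF Suc.prems Wc] col] by blast
  obtain V g where V: "unitary m V" and "B = V * mat_diag m g * mat_adjoint V"
    using Suc.IH[OF B] by blast
  with WAW show ?case by (intro unitary_diagonalization_step[OF Suc.prems(1) W V]) simp
qed

definition fun_calc :: "complex mat \<Rightarrow> nat \<Rightarrow> (nat \<Rightarrow> complex) \<Rightarrow> complex mat" where
  "fun_calc U n f = U * mat_diag n f * mat_adjoint U"

lemma fun_calc_carrier: "unitary n U \<Longrightarrow> fun_calc U n f \<in> carrier_mat n n"
  unfolding fun_calc_def by (metis mat_adjoint_carrier mat_diag_dim mult_carrier_mat unitary_carrier)

lemma fun_calc_cong:
  assumes "\<And>i. i < n \<Longrightarrow> f i = g i"
  shows "fun_calc U n f = fun_calc U n g"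
proof -
  have "mat_diag n f = mat_diag n g" by (rule eq_matI) (auto simp: mat_diag_def assms)
  thus ?thesis by (simp add: fun_calc_def)
qed

lemma fun_calc_mult:
  assumes U: "unitary n U"
  shows "fun_calc U n f * fun_calc U n g = fun_calc U n (\<lambda>i. f i * g i)"
proof -
  have Uc: "U \<in> carrier_mat n n" using U by (rule unitary_carrier)
  note assoc = assoc_mult_mat[of _ n n _ n _ n] mult_carrier_mat[of _ n n _ n]
  have "fun_calc U n f * fun_calc U n g = U * mat_diag n f * (mat_adjoint U * U) * mat_diag n g * mat_adjoint U"
    using Uc by (simp add: fun_calc_def assoc)
  also have "\<dots> = U * (mat_diag n f * mat_diag n g) * mat_adjoint U"
    using U Uc by (simp add: unitary_def assoc right_mult_one_mat[of _ n n])
  finally show ?thesis by (simp add: fun_calc_def)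
qed

lemma fun_calc_add:
  assumes U: "unitary n U"
  shows "fun_calc U n f + fun_calc U n g = fun_calc U n (\<lambda>i. f i + g i)"
proof -
  have Uc: "U \<in> carrier_mat n n" using U by (rule unitary_carrier)
  have "mat_diag n f + mat_diag n g = mat_diag n (\<lambda>i. f i + g i)"
    by (rule eq_matI) (auto simp: mat_diag_def)
  moreover have "U * (mat_diag n f + mat_diag n g) = U * mat_diag n f + U * mat_diag n g"
    using Uc by (intro mult_add_distrib_mat[of _ n n _ n]) auto
  moreover have "(U * mat_diag n f + U * mat_diag n g) * mat_adjoint U
      = U * mat_diag n f * mat_adjoint U + U * mat_diag n g * mat_adjoint U"
    using Uc by (intro add_mult_distrib_mat[of _ n n]) (auto simp: mult_carrier_mat[of _ n n])
  ultimately show ?thesis by (simp add: fun_calc_def)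
qed

lemma fun_calc_const:
  assumes U: "unitary n U"
  shows "fun_calc U n (\<lambda>_. 0) = 0\<^sub>m n n" "fun_calc U n (\<lambda>_. 1) = 1\<^sub>m n"
proof -
  have Uc: "U \<in> carrier_mat n n" using U by (rule unitary_carrier)
  have "mat_diag n (\<lambda>_. 0 :: complex) = 0\<^sub>m n n" by (rule eq_matI) (auto simp: mat_diag_def)
  thus "fun_calc U n (\<lambda>_. 0) = 0\<^sub>m n n" using Uc by (simp add: fun_calc_def)
  show "fun_calc U n (\<lambda>_. 1) = 1\<^sub>m n" using U Uc by (simp add: fun_calc_def unitary_def)
qed

lemma mat_adjoint_fun_calc:
  assumes U: "unitary n U"
  shows "mat_adjoint (fun_calc U n f) = fun_calc U n (\<lambda>i. cnj (f i))"
proof -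
  have Uc: "U \<in> carrier_mat n n" using U by (rule unitary_carrier)
  have "mat_adjoint (fun_calc U n f) = mat_adjoint (mat_adjoint U) * mat_adjoint (U * mat_diag n f)"
    unfolding fun_calc_def using Uc by (intro mat_adjoint_mult[of _ n n _ n]) (auto simp: mult_carrier_mat[of _ n n])
  also have "mat_adjoint (U * mat_diag n f) = mat_adjoint (mat_diag n f) * mat_adjoint U"
    using Uc by (intro mat_adjoint_mult[of _ n n _ n]) auto
  finally show ?thesis
    using Uc by (simp add: fun_calc_def mat_adjoint_mat_diag assoc_mult_mat[of _ n n _ n _ n])
qed

lemma psd_fun_calc: "unitary n U \<Longrightarrow> (\<And>i. i < n \<Longrightarrow> 0 \<le> f i) \<Longrightarrow> psd n (fun_calc U n f)"
  using psd_congruence[OF psd_mat_diag, of n f "mat_adjoint U"] unitary_carrier[of n U]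
  by (simp add: fun_calc_def)

lemma psd_spectral:
  assumes A: "psd n A"
  obtains U f where "unitary n U" "\<And>i. i < n \<Longrightarrow> 0 \<le> f i" "A = fun_calc U n f"
proof -
  obtain U f where U: "unitary n U" and Aeq: "A = U * mat_diag n f * mat_adjoint U"
    using hermitian_spectral[OF psd_carrier[OF A] psd_hermitian[OF A]] by blast
  have "mat_diag n f = mat_adjoint U * A * U"
    using unitary_adjoint_conj_cancel[OF U mat_diag_dim] Aeq by simp
  hence "psd n (mat_diag n f)" using psd_congruence[OF A unitary_carrier[OF U]] by simp
  hence "0 \<le> f i" if "i < n" for i using psd_diag_nonneg[of n "mat_diag n f" i] that by (simp add: mat_diag_def)
  with U Aeq show thesis by (intro that[of U f]) (simp_all add: fun_calc_def)
qed

section \<open>The positive square root\<close>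

lemma csqrt_nonneg: "0 \<le> (z :: complex) \<Longrightarrow> 0 \<le> csqrt z"
  by (simp add: less_eq_complex_def)

lemma csqrt_mult_self: "csqrt z * csqrt z = z"
  using power2_csqrt[of z] by (simp add: power2_eq_square)

lemma cnj_csqrt_nonneg: "0 \<le> z \<Longrightarrow> cnj (csqrt z) = csqrt z"
  by (simp add: less_eq_complex_def)

lemma hermitian_cube_eq_0:
  assumes Z: "(Z :: complex mat) \<in> carrier_mat n n" "mat_adjoint Z = Z" and cube: "Z * Z * Z = 0\<^sub>m n n"
  shows "Z = 0\<^sub>m n n"
proof -
  have ZZ: "Z * Z \<in> carrier_mat n n" using Z by (simp add: mult_carrier_mat[of _ n n _ n])
  have "mat_adjoint (Z * Z) * (Z * Z) = Z * (Z * Z * Z)"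
    using Z by (simp add: mat_adjoint_mult[of _ n n _ n] assoc_mult_mat[of _ n n _ n _ n]
        mult_carrier_mat[of _ n n _ n])
  hence "Z * Z = 0\<^sub>m n n" using mat_adjoint_mult_self_eq_0[OF ZZ] Z cube by simp
  thus ?thesis using mat_adjoint_mult_self_eq_0[OF Z(1)] Z(2) by simp
qed

text \<open>A positive square root W of a diagonal matrix D commutes with D, hence with the diagonal
  square root S of D. So Z = W - S satisfies Z (W + S) = 0; the positive matrices Z W Z and Z S Z then
  sum to zero, and Z^3 = Z W Z - Z S Z = 0 forces the hermitian Z to vanish.\<close>
lemma psd_sqrt_mat_diag_unique:
  assumes W: "psd n W" and WW: "W * W = mat_diag n f" and f: "\<And>i. i < n \<Longrightarrow> 0 \<le> f i"
  shows "W = mat_diag n (\<lambda>i. csqrt (f i))"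
proof -
  note assoc = assoc_mult_mat[of _ n n _ n _ n] mult_carrier_mat[of _ n n _ n]
  define S where "S = mat_diag n (\<lambda>i. csqrt (f i))"
  have Wc: "W \<in> carrier_mat n n" and Sc: "S \<in> carrier_mat n n" using W by (auto simp: psd_carrier S_def)
  have S: "psd n S" unfolding S_def by (rule psd_mat_diag) (simp add: f csqrt_nonneg)
  have SS: "S * S = mat_diag n f" by (simp add: S_def csqrt_mult_self)
  have "W * mat_diag n f = mat_diag n f * W" unfolding WW[symmetric] using Wc by (simp add: assoc)
  hence "W $$ (i, j) * f j = f i * W $$ (i, j)" if "i < n" "j < n" for i j
    using Wc that by (metis (no_types, lifting) index_mat(1) mat_diag_mult_left mat_diag_mult_right
        old.prod.case)
  hence "W $$ (i, j) * csqrt (f j) = csqrt (f i) * W $$ (i, j)" if "i < n" "j < n" for i j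
    using that by (metis mult.commute mult_cancel_left)
  hence WS: "W * S = S * W"
    by (intro eq_matI) (use Wc in \<open>auto simp: S_def mat_diag_mult_left mat_diag_mult_right\<close>)
  define Z where "Z = W - S"
  have Zc: "Z \<in> carrier_mat n n" unfolding Z_def by (rule minus_carrier_mat[OF Sc])
  have hZ: "mat_adjoint Z = Z"
    using Wc Sc psd_hermitian[OF W] psd_hermitian[OF S] by (simp add: Z_def mat_adjoint_minus)
  have "Z * (W + S) = (W * W - S * W) + (W * S - S * S)"
    using Wc Sc Zc by (simp add: Z_def mult_add_distrib_mat[of _ n n _ n] minus_mult_distrib_mat[of _ n n _ _ n])
  also have "\<dots> = 0\<^sub>m n n" by (rule eq_matI) (use Wc Sc in \<open>auto simp: WW SS WS mat_diag_def\<close>)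
  finally have Z0: "Z * (W + S) = 0\<^sub>m n n" .
  have "Z * W * Z + Z * S * Z = Z * (W + S) * Z"
    using Wc Sc Zc by (simp add: mult_add_distrib_mat[of _ n n] add_mult_distrib_mat[of _ n n] assoc)
  also have "\<dots> = 0\<^sub>m n n" using Zc by (simp add: Z0)
  finally have sum0: "Z * W * Z + Z * S * Z = 0\<^sub>m n n" .
  have "psd n (Z * W * Z)" "psd n (Z * S * Z)"
    using psd_congruence[OF W Zc] psd_congruence[OF S Zc] hZ by simp_all
  hence "Z * W * Z = 0\<^sub>m n n" "Z * S * Z = 0\<^sub>m n n" using sum0 psd_add_eq_0 by blast+
  moreover have "Z * Z = Z * W - Z * S"
    using mult_minus_distrib_mat[OF Zc Wc Sc] by (simp only: Z_def[symmetric])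
  hence "Z * Z * Z = Z * W * Z - Z * S * Z"
    using Zc Wc Sc by (simp add: minus_mult_distrib_mat[of _ n n _ _ n])
  ultimately have "Z * Z * Z = 0\<^sub>m n n" by simp
  hence "Z = 0\<^sub>m n n" by (rule hermitian_cube_eq_0[OF Zc hZ])
  moreover have "W = Z + S" by (rule eq_matI) (use Wc Sc in \<open>auto simp: Z_def\<close>)
  ultimately show ?thesis using Sc by (simp add: S_def)
qed

lemma psd_sqrt_fun_calc:
  assumes U: "unitary n U" and f: "\<And>i. i < n \<Longrightarrow> 0 \<le> f i"
  shows "psd_sqrt n (fun_calc U n f) = fun_calc U n (\<lambda>i. csqrt (f i))"
  unfolding psd_sqrt_def
proof (rule the_equality)
  show "psd n (fun_calc U n (\<lambda>i. csqrt (f i))) \<and>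
      fun_calc U n (\<lambda>i. csqrt (f i)) * fun_calc U n (\<lambda>i. csqrt (f i)) = fun_calc U n f"
    using U f by (simp add: psd_fun_calc csqrt_nonneg fun_calc_mult csqrt_mult_self)
  fix B assume B: "psd n B \<and> B * B = fun_calc U n f"
  have Uc: "U \<in> carrier_mat n n" and Bc: "B \<in> carrier_mat n n"
    using U B by (auto simp: unitary_carrier psd_carrier)
  define W where "W = mat_adjoint U * B * U"
  note assoc = assoc_mult_mat[of _ n n _ n _ n] mult_carrier_mat[of _ n n _ n]
  have "W * W = mat_adjoint U * B * (U * mat_adjoint U) * B * U"
    using Uc Bc by (simp add: W_def assoc)
  also have "\<dots> = mat_adjoint U * (B * B) * U"
    using U Uc Bc by (simp add: unitary_def assoc right_mult_one_mat[of _ n n])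
  also have "\<dots> = mat_diag n f"
    using B unitary_adjoint_conj_cancel[OF U mat_diag_dim] by (simp add: fun_calc_def)
  finally have WW: "W * W = mat_diag n f" .
  have "psd n W" unfolding W_def using B Uc by (intro psd_congruence) auto
  hence "W = mat_diag n (\<lambda>i. csqrt (f i))" using WW f by (rule psd_sqrt_mat_diag_unique)
  thus "B = fun_calc U n (\<lambda>i. csqrt (f i))"
    using unitary_conj_cancel[OF U Bc] by (simp add: W_def fun_calc_def)
qed

section \<open>Linear maps and their duals\<close>

lemma linear_mapD:
  assumes "Defs.linear_map d L"
  shows "\<And>X. X \<in> carrier_mat d d \<Longrightarrow> L X \<in> carrier_mat d d"
    and "\<And>X Y. X \<in> carrier_mat d d \<Longrightarrow> Y \<in> carrier_mat d d \<Longrightarrow> L (X + Y) = L X + L Y"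
    and "\<And>X c. X \<in> carrier_mat d d \<Longrightarrow> L (c \<cdot>\<^sub>m X) = c \<cdot>\<^sub>m L X"
  using assms by (auto simp: Defs.linear_map_def)

lemma linear_map_congruence:
  assumes K: "K \<in> carrier_mat d d"
  shows "Defs.linear_map d (\<lambda>X. mat_adjoint K * X * K)"
  unfolding Defs.linear_map_def
  using K by (auto simp: mult_carrier_mat[of _ d d] mult_add_distrib_mat[of _ d d] add_mult_distrib_mat[of _ d d]
      mult_smult_distrib[of _ d d] mult_smult_assoc_mat[of _ d d])

lemma linear_map_comp:
  "Defs.linear_map d L1 \<Longrightarrow> Defs.linear_map d L2 \<Longrightarrow> Defs.linear_map d (\<lambda>X. L1 (L2 X))"
  unfolding Defs.linear_map_def by simp

lemma linear_map_add:
  assumes L1: "Defs.linear_map d L1" and L2: "Defs.linear_map d L2"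
  shows "Defs.linear_map d (\<lambda>X. L1 X + L2 X)"
  unfolding Defs.linear_map_def
proof (intro conjI ballI allI)
  note l1 = linear_mapD[OF L1] and l2 = linear_mapD[OF L2]
  fix X :: "complex mat" assume X: "X \<in> carrier_mat d d"
  show "L1 X + L2 X \<in> carrier_mat d d" using l1(1)[OF X] l2(1)[OF X] by simp
  fix c :: complex
  show "L1 (c \<cdot>\<^sub>m X) + L2 (c \<cdot>\<^sub>m X) = c \<cdot>\<^sub>m (L1 X + L2 X)"
    using l1(1)[OF X] l2(1)[OF X] by (simp add: l1(3)[OF X] l2(3)[OF X] add_smult_distrib_left_mat)
next
  note l1 = linear_mapD[OF L1] and l2 = linear_mapD[OF L2]
  fix X Y :: "complex mat" assume X: "X \<in> carrier_mat d d" and Y: "Y \<in> carrier_mat d d"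
  show "L1 (X + Y) + L2 (X + Y) = L1 X + L2 X + (L1 Y + L2 Y)"
    unfolding l1(2)[OF X Y] l2(2)[OF X Y]
    by (rule eq_matI) (use l1(1)[OF X] l1(1)[OF Y] l2(1)[OF X] l2(1)[OF Y] in auto)
qed

definition mat_unit :: "nat \<Rightarrow> nat \<Rightarrow> nat \<Rightarrow> complex mat" where
  "mat_unit n i j = mat n n (\<lambda>(p, q). if p = i \<and> q = j then 1 else 0)"

lemma mat_unit_carrier [simp]:
  "mat_unit n i j \<in> carrier_mat n n" "dim_row (mat_unit n i j) = n" "dim_col (mat_unit n i j) = n"
  by (simp_all add: mat_unit_def)

lemma linear_functional_expansion:
  fixes f :: "complex mat \<Rightarrow> complex"
  assumes add: "\<And>X Y. X \<in> carrier_mat d d \<Longrightarrow> Y \<in> carrier_mat d d \<Longrightarrow> f (X + Y) = f X + f Y"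
    and smult: "\<And>X c. X \<in> carrier_mat d d \<Longrightarrow> f (c \<cdot>\<^sub>m X) = c * f X"
    and X: "X \<in> carrier_mat d d"
  shows "f X = (\<Sum>i<d. \<Sum>j<d. X $$ (i, j) * f (mat_unit d i j))"
proof -
  define R where "R S = mat d d (\<lambda>p. if p \<in> S then X $$ p else 0)" for S
  have R: "f (R S) = (\<Sum>p\<in>S. X $$ p * f (mat_unit d (fst p) (snd p)))"
    if "S \<subseteq> {..<d} \<times> {..<d}" for S
  proof -
    have "finite S" using that finite_subset by blast
    thus ?thesis using that
    proof (induction S rule: finite_induct)
      case empty
      have "R {} = 0 \<cdot>\<^sub>m (0\<^sub>m d d)" by (rule eq_matI) (auto simp: R_def)
      thus ?case using smult[of "0\<^sub>m d d" 0] by simp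
    next
      case (insert x S)
      have "R (insert x S) = R S + X $$ x \<cdot>\<^sub>m mat_unit d (fst x) (snd x)"
        using insert by (intro eq_matI) (auto simp: R_def mat_unit_def split: prod.splits)
      thus ?case using insert add smult by (simp add: R_def)
    qed
  qed
  have "R ({..<d} \<times> {..<d}) = X" by (rule eq_matI) (use X in \<open>auto simp: R_def\<close>)
  with R[of "{..<d} \<times> {..<d}"] show ?thesis by (simp add: sum.cartesian_product split_def)
qed

lemma mtrace_mat_unit_mult:
  assumes "Z \<in> carrier_mat d d" "i < d" "j < d"
  shows "mtrace (mat_unit d i j * Z) = Z $$ (j, i)"
proof -
  have "mtrace (mat_unit d i j * Z) = (\<Sum>p<d. \<Sum>q<d. mat_unit d i j $$ (p, q) * Z $$ (q, p))"
    using assms by (auto simp: mtrace_def scalar_prod_def atLeast0LessThan intro!: sum.cong)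
  also have "\<dots> = (\<Sum>p<d. \<Sum>q<d. if q = j then (if p = i then Z $$ (q, p) else 0) else 0)"
    by (intro sum.cong refl) (simp add: mat_unit_def)
  also have "\<dots> = Z $$ (j, i)" using assms by simp
  finally show ?thesis .
qed

lemma dual_map_eqI:
  assumes Z: "Z \<in> carrier_mat d d" and tr: "\<And>X. X \<in> carrier_mat d d \<Longrightarrow> mtrace (L X * Y) = mtrace (X * Z)"
  shows "dual_map d L Y = Z"
  unfolding dual_map_def
proof (rule the_equality)
  show "Z \<in> carrier_mat d d \<and> (\<forall>X\<in>carrier_mat d d. mtrace (L X * Y) = mtrace (X * Z))"
    using assms by blast
  fix Z' assume Z': "Z' \<in> carrier_mat d d \<and> (\<forall>X\<in>carrier_mat d d. mtrace (L X * Y) = mtrace (X * Z'))"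
  show "Z' = Z"
  proof (rule eq_matI)
    fix i j assume "i < dim_row Z" "j < dim_col Z"
    hence ij: "i < d" "j < d" using Z by auto
    have "mtrace (mat_unit d j i * Z') = mtrace (mat_unit d j i * Z)"
      using Z' tr[of "mat_unit d j i"] by simp
    thus "Z' $$ (i, j) = Z $$ (i, j)" using Z Z' ij by (simp add: mtrace_mat_unit_mult)
  qed (use Z Z' in auto)
qed

lemma linear_map_dual_map:
  assumes L: "Defs.linear_map d L" and Y: "Y \<in> carrier_mat d d"
  shows "dual_map d L Y \<in> carrier_mat d d"
    and "\<And>X. X \<in> carrier_mat d d \<Longrightarrow> mtrace (L X * Y) = mtrace (X * dual_map d L Y)"
proof -
  note L = linear_mapD[OF L]
  define Z where "Z = mat d d (\<lambda>(i, j). mtrace (L (mat_unit d j i) * Y))"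
  have Z: "Z \<in> carrier_mat d d" by (simp add: Z_def)
  have tr: "mtrace (L X * Y) = mtrace (X * Z)" if X: "X \<in> carrier_mat d d" for X
  proof -
    have "mtrace (L X * Y) = (\<Sum>i<d. \<Sum>j<d. X $$ (i, j) * mtrace (L (mat_unit d i j) * Y))"
    proof (rule linear_functional_expansion[OF _ _ X])
      fix X1 X2 :: "complex mat" assume "X1 \<in> carrier_mat d d" "X2 \<in> carrier_mat d d"
      thus "mtrace (L (X1 + X2) * Y) = mtrace (L X1 * Y) + mtrace (L X2 * Y)"
        using L Y by (simp add: add_mult_distrib_mat[of _ d d] mtrace_add[of _ d] mult_carrier_mat[of _ d d])
    next
      fix X1 :: "complex mat" and c assume "X1 \<in> carrier_mat d d"
      thus "mtrace (L (c \<cdot>\<^sub>m X1) * Y) = c * mtrace (L X1 * Y)"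
        using L Y by (simp add: mult_smult_assoc_mat[of _ d d] mtrace_smult[of _ d] mult_carrier_mat[of _ d d])
    qed
    also have "\<dots> = mtrace (X * Z)"
      using X Z by (auto simp: Z_def mtrace_def scalar_prod_def atLeast0LessThan intro!: sum.cong)
    finally show ?thesis .
  qed
  have "dual_map d L Y = Z" using Z tr by (rule dual_map_eqI)
  thus "dual_map d L Y \<in> carrier_mat d d" "\<And>X. X \<in> carrier_mat d d \<Longrightarrow> mtrace (L X * Y) = mtrace (X * dual_map d L Y)"
    using Z tr by auto
qed

section \<open>Ampliations and complete positivity\<close>

lemma block_carrier [simp]:
  "block d M a b \<in> carrier_mat d d" "dim_row (block d M a b) = d" "dim_col (block d M a b) = d"
  by (simp_all add: block_def)

lemma index_block [simp]: "i < d \<Longrightarrow> j < d \<Longrightarrow> block d M a b $$ (i, j) = M $$ (a * d + i, b * d + j)"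
  by (simp add: block_def)

lemma ampliation_carrier [simp]:
  "ampliation d k L M \<in> carrier_mat (k * d) (k * d)"
  "dim_row (ampliation d k L M) = k * d" "dim_col (ampliation d k L M) = k * d"
  by (simp_all add: ampliation_def)

lemma block_index_less:
  assumes "a < k" "i < d"
  shows "a * d + i < k * (d :: nat)"
proof -
  have "a * d + i < Suc a * d" using assms(2) by simp
  also have "\<dots> \<le> k * d" using assms(1) by (intro mult_right_mono) auto
  finally show ?thesis .
qed

lemma div_mod_less_block: "r < k * (d :: nat) \<Longrightarrow> r div d < k \<and> r mod d < d"
  using less_mult_imp_div_less[of r k d] by (cases "d = 0") auto

lemma index_ampliation:
  "r < k * d \<Longrightarrow> s < k * d \<Longrightarrow>
   ampliation d k L M $$ (r, s) = L (block d M (r div d) (s div d)) $$ (r mod d, s mod d)"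
  by (simp add: ampliation_def)

lemma index_ampliation_block:
  assumes "a < k" "b < k" "i < d" "j < d"
  shows "ampliation d k L M $$ (a * d + i, b * d + j) = L (block d M a b) $$ (i, j)"
  using assms block_index_less[OF assms(1,3)] block_index_less[OF assms(2,4)] by (simp add: index_ampliation)

lemma block_ampliation:
  "a < k \<Longrightarrow> b < k \<Longrightarrow> L (block d M a b) \<in> carrier_mat d d \<Longrightarrow>
   block d (ampliation d k L M) a b = L (block d M a b)"
  by (rule eq_matI) (auto simp: index_ampliation_block)

lemma mat_eq_blockwiseI:
  assumes "A \<in> carrier_mat (k * d) (k * d)" "B \<in> carrier_mat (k * d) (k * d)"
    and "\<And>a b. a < k \<Longrightarrow> b < k \<Longrightarrow> block d A a b = block d B a b"
  shows "A = B"
proof (rule eq_matI)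
  fix r s assume "r < dim_row B" "s < dim_col B"
  hence r: "r div d < k" "r mod d < d" and s: "s div d < k" "s mod d < d"
    using assms div_mod_less_block by auto
  have "block d A (r div d) (s div d) $$ (r mod d, s mod d) = block d B (r div d) (s div d) $$ (r mod d, s mod d)"
    using assms r s by simp
  thus "A $$ (r, s) = B $$ (r, s)" using r s by (simp add: mult.commute)
qed (use assms in auto)

lemma ampliation_add:
  assumes "\<And>X. X \<in> carrier_mat d d \<Longrightarrow> L2 X \<in> carrier_mat d d"
  shows "ampliation d k (\<lambda>X. L1 X + L2 X) M = ampliation d k L1 M + ampliation d k L2 M"
proof (rule eq_matI)
  fix r s assume "r < dim_row (ampliation d k L1 M + ampliation d k L2 M)"
    "s < dim_col (ampliation d k L1 M + ampliation d k L2 M)"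
  hence rs: "r < k * d" "s < k * d" by auto
  have "L2 (block d M (r div d) (s div d)) \<in> carrier_mat d d" using assms by simp
  thus "ampliation d k (\<lambda>X. L1 X + L2 X) M $$ (r, s) = (ampliation d k L1 M + ampliation d k L2 M) $$ (r, s)"
    using rs div_mod_less_block[OF rs(1)] div_mod_less_block[OF rs(2)] by (simp add: index_ampliation)
qed auto

lemma ampliation_comp:
  assumes "\<And>X. X \<in> carrier_mat d d \<Longrightarrow> L2 X \<in> carrier_mat d d"
  shows "ampliation d k (\<lambda>X. L1 (L2 X)) M = ampliation d k L1 (ampliation d k L2 M)"
proof (rule eq_matI)
  fix r s assume "r < dim_row (ampliation d k L1 (ampliation d k L2 M))"
    "s < dim_col (ampliation d k L1 (ampliation d k L2 M))"
  hence rs: "r < k * d" "s < k * d" by auto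
  hence "block d (ampliation d k L2 M) (r div d) (s div d) = L2 (block d M (r div d) (s div d))"
    using assms div_mod_less_block by (intro block_ampliation) auto
  thus "ampliation d k (\<lambda>X. L1 (L2 X)) M $$ (r, s) = ampliation d k L1 (ampliation d k L2 M) $$ (r, s)"
    using rs by (simp add: index_ampliation)
qed auto

lemma ampliation_one:
  assumes "M \<in> carrier_mat d d" "L M \<in> carrier_mat d d"
  shows "ampliation d 1 L M = L M"
proof -
  have "block d M 0 0 = M" by (rule eq_matI) (use assms in auto)
  thus ?thesis using assms by (intro eq_matI) (auto simp: index_ampliation)
qed

text \<open>The matrix of the identity on C^k tensored with K, acting on k x k block matrices.\<close>
definition block_diag_rep :: "nat \<Rightarrow> nat \<Rightarrow> complex mat \<Rightarrow> complex mat" where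
  "block_diag_rep d k K = mat (k * d) (k * d) (\<lambda>(r, s). if r div d = s div d then K $$ (r mod d, s mod d) else 0)"

lemma block_diag_rep_carrier [simp]: "block_diag_rep d k K \<in> carrier_mat (k * d) (k * d)"
  by (simp add: block_diag_rep_def)

lemma sum_block_column:
  fixes b k d :: nat
  assumes "b < k"
  shows "(\<Sum>q<k * d. if q div d = b then g q else 0) = (\<Sum>p<d. g (b * d + p))"
proof -
  have "(\<Sum>q<k * d. if q div d = b then g q else 0) = (\<Sum>q\<in>{q\<in>{..<k * d}. q div d = b}. g q)"
    by (rule sum.inter_filter[symmetric]) simp
  also have "{q\<in>{..<k * d}. q div d = b} = (\<lambda>p. b * d + p) ` {..<d}"
  proof
    show "{q\<in>{..<k * d}. q div d = b} \<subseteq> (\<lambda>p. b * d + p) ` {..<d}"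
    proof
      fix q assume "q \<in> {q\<in>{..<k * d}. q div d = b}"
      hence "q = b * d + q mod d" "q mod d < d" using div_mod_less_block[of q k d] by auto
      thus "q \<in> (\<lambda>p. b * d + p) ` {..<d}" by blast
    qed
  qed (use assms block_index_less in auto)
  also have "(\<Sum>q\<in>(\<lambda>p. b * d + p) ` {..<d}. g q) = (\<Sum>p<d. g (b * d + p))"
    by (subst sum.reindex) (auto simp: inj_on_def)
  finally show ?thesis .
qed

lemma block_mult_block_diag_rep:
  assumes M: "M \<in> carrier_mat (k * d) (k * d)" and K: "K \<in> carrier_mat d d" and ab: "a < k" "b < k"
  shows "block d (M * block_diag_rep d k K) a b = block d M a b * K"
proof (rule eq_matI)
  fix i j assume "i < dim_row (block d M a b * K)" "j < dim_col (block d M a b * K)"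
  hence ij: "i < d" "j < d" using K by auto
  have "(M * block_diag_rep d k K) $$ (a * d + i, b * d + j)
      = (\<Sum>q<k * d. if q div d = b then M $$ (a * d + i, q) * K $$ (q mod d, j) else 0)"
    using M ab ij block_index_less
    by (auto simp: block_diag_rep_def scalar_prod_def atLeast0LessThan intro!: sum.cong)
  also have "\<dots> = (block d M a b * K) $$ (i, j)"
    using K ab ij by (simp add: sum_block_column scalar_prod_def atLeast0LessThan)
  finally show "block d (M * block_diag_rep d k K) a b $$ (i, j) = (block d M a b * K) $$ (i, j)"
    using ij by simp
qed (use K in auto)

lemma block_diag_rep_mult_block:
  assumes M: "M \<in> carrier_mat (k * d) (k * d)" and K: "K \<in> carrier_mat d d" and ab: "a < k" "b < k"
  shows "block d (block_diag_rep d k K * M) a b = K * block d M a b"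
proof (rule eq_matI)
  fix i j assume "i < dim_row (K * block d M a b)" "j < dim_col (K * block d M a b)"
  hence ij: "i < d" "j < d" using K by auto
  have "(block_diag_rep d k K * M) $$ (a * d + i, b * d + j)
      = (\<Sum>q<k * d. if q div d = a then K $$ (i, q mod d) * M $$ (q, b * d + j) else 0)"
    using M ab ij block_index_less
    by (auto simp: block_diag_rep_def scalar_prod_def atLeast0LessThan intro!: sum.cong)
  also have "\<dots> = (K * block d M a b) $$ (i, j)"
    using K ab ij by (simp add: sum_block_column scalar_prod_def atLeast0LessThan)
  finally show "block d (block_diag_rep d k K * M) a b $$ (i, j) = (K * block d M a b) $$ (i, j)"
    using ij by simp
qed (use K in auto)

lemma mat_adjoint_block_diag_rep:
  assumes K: "K \<in> carrier_mat d d"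
  shows "mat_adjoint (block_diag_rep d k K) = block_diag_rep d k (mat_adjoint K)"
proof (rule eq_matI)
  fix r s assume "r < dim_row (block_diag_rep d k (mat_adjoint K))" "s < dim_col (block_diag_rep d k (mat_adjoint K))"
  hence "r < k * d" "s < k * d" by (simp_all add: block_diag_rep_def)
  thus "mat_adjoint (block_diag_rep d k K) $$ (r, s) = block_diag_rep d k (mat_adjoint K) $$ (r, s)"
    using K div_mod_less_block by (auto simp: block_diag_rep_def)
qed (simp_all add: block_diag_rep_def)

lemma ampliation_congruence:
  assumes K: "K \<in> carrier_mat d d" and M: "M \<in> carrier_mat (k * d) (k * d)"
  shows "ampliation d k (\<lambda>X. mat_adjoint K * X * K) M
       = mat_adjoint (block_diag_rep d k K) * M * block_diag_rep d k K"
proof (rule mat_eq_blockwiseI)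
  let ?B = "block_diag_rep d k"
  have BM: "mat_adjoint (?B K) * M \<in> carrier_mat (k * d) (k * d)"
    using M by (simp add: mult_carrier_mat[of _ "k * d" "k * d"])
  show "mat_adjoint (?B K) * M * ?B K \<in> carrier_mat (k * d) (k * d)"
    using BM by (simp add: mult_carrier_mat[of _ "k * d" "k * d"])
  fix a b assume ab: "a < k" "b < k"
  have "block d (mat_adjoint (?B K) * M * ?B K) a b = block d (?B (mat_adjoint K) * M) a b * K"
    using block_mult_block_diag_rep[OF BM K ab] K by (simp add: mat_adjoint_block_diag_rep)
  also have "\<dots> = mat_adjoint K * block d M a b * K"
    using block_diag_rep_mult_block[OF M _ ab, of "mat_adjoint K"] K by simp
  also have "\<dots> = block d (ampliation d k (\<lambda>X. mat_adjoint K * X * K) M) a b"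
    using K ab by (simp add: block_ampliation mult_carrier_mat[of _ d d])
  finally show "block d (ampliation d k (\<lambda>X. mat_adjoint K * X * K) M) a b
      = block d (mat_adjoint (?B K) * M * ?B K) a b" by simp
qed simp

lemma completely_positive_imp_psd:
  assumes cp: "completely_positive d L" and M: "psd d M" and LM: "L M \<in> carrier_mat d d"
  shows "psd d (L M)"
proof -
  have "psd (1 * d) M" using M by simp
  hence "psd (1 * d) (ampliation d 1 L M)" using cp unfolding completely_positive_def by blast
  thus ?thesis using ampliation_one[of M d L] psd_carrier[OF M] LM by simp
qed

lemma completely_positive_congruence:
  assumes K: "K \<in> carrier_mat d d"
  shows "completely_positive d (\<lambda>X. mat_adjoint K * X * K)"
  unfolding completely_positive_def
  using ampliation_congruence[OF K psd_carrier] psd_congruence[OF _ block_diag_rep_carrier] by simp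

lemma completely_positive_comp:
  "completely_positive d L1 \<Longrightarrow> completely_positive d L2 \<Longrightarrow> (\<And>X. X \<in> carrier_mat d d \<Longrightarrow> L2 X \<in> carrier_mat d d)
   \<Longrightarrow> completely_positive d (\<lambda>X. L1 (L2 X))"
  unfolding completely_positive_def by (simp add: ampliation_comp)

lemma completely_positive_add:
  "completely_positive d L1 \<Longrightarrow> completely_positive d L2 \<Longrightarrow> (\<And>X. X \<in> carrier_mat d d \<Longrightarrow> L2 X \<in> carrier_mat d d)
   \<Longrightarrow> completely_positive d (\<lambda>X. L1 X + L2 X)"
  unfolding completely_positive_def by (simp add: ampliation_add psd_add)

lemma psd_adjoint_mult_self:
  assumes C: "C \<in> carrier_mat m n"
  shows "psd n (mat_adjoint C * C)"
proof -
  have "psd m (1\<^sub>m m)"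
    unfolding psd_iff
  proof (intro conjI ballI)
    fix v :: "complex vec" assume v: "v \<in> carrier_vec m"
    have "qf (1\<^sub>m m) v = v \<bullet>c v" using v by (simp add: qf_eq_scalar_prod[of _ m] conjugate_vec_sprod_comm[of _ m])
    thus "0 \<le> qf (1\<^sub>m m) v" using conjugate_square_ge_0_vec[of v] by simp
  qed simp
  from psd_congruence[OF this C] show ?thesis using C by simp
qed

lemma block_four_block_mat:
  assumes "A \<in> carrier_mat d d" "B \<in> carrier_mat d d" "C \<in> carrier_mat d d" "D \<in> carrier_mat d d"
  shows "block d (four_block_mat A B C D) 0 1 = B" "block d (four_block_mat A B C D) 1 0 = C"
    "block d (four_block_mat A B C D) 1 1 = D"
  by (rule eq_matI; use assms in auto)+

text \<open>Apply complete positivity to the positive block matrix [[Y Y*, Y Q], [Q* Y*, Q* Q]] and use that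
  a vanishing diagonal block of a positive matrix kills its row and column of blocks.\<close>
lemma completely_positive_annihilator:
  assumes cp: "completely_positive d L" and L: "\<And>X. X \<in> carrier_mat d d \<Longrightarrow> L X \<in> carrier_mat d d"
    and Q: "Q \<in> carrier_mat d d" and Y: "Y \<in> carrier_mat d d" and LQ: "L (mat_adjoint Q * Q) = 0\<^sub>m d d"
  shows "L (Y * Q) = 0\<^sub>m d d" "L (mat_adjoint Q * mat_adjoint Y) = 0\<^sub>m d d"
proof -
  define C where "C = four_block_mat (mat_adjoint Y) Q (0\<^sub>m d d) (0\<^sub>m d d)"
  define P where "P = mat_adjoint C * C"
  have "C \<in> carrier_mat (2 * d) (2 * d)" using Y Q by (simp add: C_def mult_2)
  hence "psd (2 * d) (ampliation d 2 L P)"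
    using cp psd_adjoint_mult_self unfolding completely_positive_def P_def by blast
  note vanish = psd_diag_eq_0_imp_row_col_eq_0[OF this]
  have P: "P = four_block_mat (Y * mat_adjoint Y) (Y * Q) (mat_adjoint Q * mat_adjoint Y) (mat_adjoint Q * Q)"
    unfolding P_def C_def using Y Q
    by (simp add: mat_adjoint_four_block_mat[of _ d d _ d _ d] mult_four_block_mat[of _ d d _ d _ d _ _ d _ d]
        mult_carrier_mat[of _ d d])
  have blocks: "L (block d P 0 1) = L (Y * Q)" "L (block d P 1 0) = L (mat_adjoint Q * mat_adjoint Y)"
    "L (block d P 1 1) = 0\<^sub>m d d"
    using block_four_block_mat[of "Y * mat_adjoint Y" d "Y * Q" "mat_adjoint Q * mat_adjoint Y" "mat_adjoint Q * Q"]
      Y Q LQ by (simp_all add: P mult_carrier_mat[of _ d d])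
  have diag: "ampliation d 2 L P $$ (1 * d + i, 1 * d + i) = 0" if "i < d" for i
    using index_ampliation_block[of 1 2 1 i d i L P] blocks(3) that by simp
  have LYQ: "L (Y * Q) \<in> carrier_mat d d" "L (mat_adjoint Q * mat_adjoint Y) \<in> carrier_mat d d"
    using L mult_carrier_mat[OF Y Q] mult_carrier_mat[of "mat_adjoint Q" d d "mat_adjoint Y" d] Y Q by auto
  show "L (Y * Q) = 0\<^sub>m d d"
  proof (rule eq_matI)
    fix j i assume "j < dim_row (0\<^sub>m d d :: complex mat)" "i < dim_col (0\<^sub>m d d :: complex mat)"
    hence ji: "j < d" "i < d" by auto
    have "ampliation d 2 L P $$ (0 * d + j, 1 * d + i) = 0"
      using vanish[OF _ diag[OF ji(2)], of "0 * d + j"] ji by simp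
    thus "L (Y * Q) $$ (j, i) = 0\<^sub>m d d $$ (j, i)"
      using index_ampliation_block[of 0 2 1 j d i L P] blocks(1) ji by simp
  qed (use LYQ in auto)
  show "L (mat_adjoint Q * mat_adjoint Y) = 0\<^sub>m d d"
  proof (rule eq_matI)
    fix i j assume "i < dim_row (0\<^sub>m d d :: complex mat)" "j < dim_col (0\<^sub>m d d :: complex mat)"
    hence ij: "i < d" "j < d" by auto
    have "ampliation d 2 L P $$ (1 * d + i, 0 * d + j) = 0"
      using vanish[OF _ diag[OF ij(1)], of "0 * d + j"] ij by simp
    thus "L (mat_adjoint Q * mat_adjoint Y) $$ (i, j) = 0\<^sub>m d d $$ (i, j)"
      using index_ampliation_block[of 1 2 0 i d j L P] blocks(2) ij by simp
  qed (use LYQ in auto)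
qed

section \<open>Extensions of a quantum operation\<close>

lemma dual_map_congruence:
  assumes K: "K \<in> carrier_mat d d"
  shows "dual_map d (\<lambda>X. mat_adjoint K * X * K) (1\<^sub>m d) = K * mat_adjoint K"
proof (rule dual_map_eqI)
  fix X :: "complex mat" assume X: "X \<in> carrier_mat d d"
  show "mtrace (mat_adjoint K * X * K * 1\<^sub>m d) = mtrace (X * (K * mat_adjoint K))"
    using mtrace_congruence[OF K X one_carrier_mat] K by simp
qed (use K in simp)

lemma quantum_operation_mtrace:
  assumes qo: "quantum_operation d \<Lambda>" and X: "X \<in> carrier_mat d d"
  shows "mtrace (\<Lambda> X) = mtrace (X * dual_map d \<Lambda> (1\<^sub>m d))"
proof -
  have L: "Defs.linear_map d \<Lambda>" using qo by (simp add: quantum_operation_def)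
  have "\<Lambda> X * 1\<^sub>m d = \<Lambda> X" using linear_mapD(1)[OF L X] by simp
  thus ?thesis using linear_map_dual_map(2)[OF L one_carrier_mat X] by simp
qed

lemma psd_dual_map_one:
  assumes qo: "quantum_operation d \<Lambda>"
  shows "psd d (dual_map d \<Lambda> (1\<^sub>m d))"
  unfolding psd_iff
proof (intro conjI ballI)
  have L: "Defs.linear_map d \<Lambda>" and cp: "completely_positive d \<Lambda>"
    using qo by (auto simp: quantum_operation_def)
  show G: "dual_map d \<Lambda> (1\<^sub>m d) \<in> carrier_mat d d" by (rule linear_map_dual_map(1)[OF L one_carrier_mat])
  fix v :: "complex vec" assume v: "v \<in> carrier_vec d"
  have "qf (dual_map d \<Lambda> (1\<^sub>m d)) v = mtrace (\<Lambda> (rank_one v))"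
    using quantum_operation_mtrace[OF qo] psd_carrier[OF psd_rank_one[OF v]] mtrace_rank_one_mult[OF G v]
    by simp
  also have "0 \<le> \<dots>"
    using completely_positive_imp_psd[OF cp psd_rank_one[OF v]] linear_mapD(1)[OF L] psd_carrier[OF psd_rank_one[OF v]]
    by (simp add: mtrace_psd_nonneg)
  finally show "0 \<le> qf (dual_map d \<Lambda> (1\<^sub>m d)) v" .
qed

lemma extension_mtrace:
  assumes qo: "quantum_operation d \<Lambda>" and ext: "is_extension d \<Lambda> \<Lambda>'" and X: "X \<in> carrier_mat d d"
  shows "mtrace (\<Lambda>' X) = mtrace (X * (1\<^sub>m d - dual_map d \<Lambda> (1\<^sub>m d)))"
proof -
  have L: "Defs.linear_map d \<Lambda>" using qo by (simp add: quantum_operation_def)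
  have L': "Defs.linear_map d \<Lambda>'" and tp: "trace_preserving d (\<lambda>X. \<Lambda> X + \<Lambda>' X)"
    using ext by (auto simp: is_extension_def quantum_operation_def)
  have G: "dual_map d \<Lambda> (1\<^sub>m d) \<in> carrier_mat d d" by (rule linear_map_dual_map(1)[OF L one_carrier_mat])
  have "mtrace X = mtrace (\<Lambda> X) + mtrace (\<Lambda>' X)"
    using tp[unfolded trace_preserving_def, rule_format, OF X] linear_mapD(1)[OF L X] linear_mapD(1)[OF L' X]
    by (simp add: mtrace_add[of _ d])
  thus ?thesis using quantum_operation_mtrace[OF qo X] mtrace_mult_one_minus[OF X G] by simp
qed

lemma congruence_is_extension:
  assumes qo: "quantum_operation d \<Lambda>" and S: "S \<in> carrier_mat d d" "mat_adjoint S = S"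
    and SS: "S * S = 1\<^sub>m d - dual_map d \<Lambda> (1\<^sub>m d)"
  shows "is_extension d \<Lambda> (\<lambda>\<rho>. S * \<rho> * S)"
proof -
  let ?G = "dual_map d \<Lambda> (1\<^sub>m d)"
  have L: "Defs.linear_map d \<Lambda>" using qo by (simp add: quantum_operation_def)
  have G: "?G \<in> carrier_mat d d" by (rule linear_map_dual_map(1)[OF L one_carrier_mat])
  have map: "(\<lambda>\<rho>. S * \<rho> * S) = (\<lambda>X. mat_adjoint S * X * S)" using S by simp
  have "dual_map d (\<lambda>\<rho>. S * \<rho> * S) (1\<^sub>m d) = 1\<^sub>m d - ?G"
    unfolding map dual_map_congruence[OF S(1)] using S SS by simp
  moreover have "1\<^sub>m d - (1\<^sub>m d - ?G) = ?G" by (rule eq_matI) (use G in auto)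
  ultimately have "trace_nonincreasing d (\<lambda>\<rho>. S * \<rho> * S)"
    using psd_dual_map_one[OF qo] G minus_carrier_mat[OF G]
    by (simp add: trace_nonincreasing_def loewner_le_def)
  hence "quantum_operation d (\<lambda>\<rho>. S * \<rho> * S)"
    unfolding quantum_operation_def map
    using linear_map_congruence[OF S(1)] completely_positive_congruence[OF S(1)] by simp
  moreover have "trace_preserving d (\<lambda>X. \<Lambda> X + S * X * S)"
    unfolding trace_preserving_def
  proof
    fix X :: "complex mat" assume X: "X \<in> carrier_mat d d"
    have "mtrace (S * X * S) = mtrace (X * (1\<^sub>m d - ?G))"
      using mtrace_congruence[OF S(1) X one_carrier_mat] S SS X by simp
    moreover note mtrace_mult_one_minus[OF X G]
    ultimately show "mtrace (\<Lambda> X + S * X * S) = mtrace X"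
      using quantum_operation_mtrace[OF qo X] linear_mapD(1)[OF L X] S X
      by (simp add: mtrace_add mult_carrier_mat[of _ d d])
  qed
  ultimately show ?thesis by (simp add: is_extension_def)
qed

lemma completely_positive_compress_to_support:
  assumes L: "Defs.linear_map d L" and cp: "completely_positive d L"
    and U: "unitary d U" and f: "\<And>i. i < d \<Longrightarrow> 0 \<le> f i"
    and tr: "\<And>X. X \<in> carrier_mat d d \<Longrightarrow> mtrace (L X) = mtrace (X * fun_calc U d f)"
    and \<rho>: "\<rho> \<in> carrier_mat d d"
  defines "R \<equiv> fun_calc U d (\<lambda>i. of_bool (f i \<noteq> 0))"
  shows "L \<rho> = L (R * \<rho> * R)"
proof -
  note l = linear_mapD[OF L]
  define Q where "Q = fun_calc U d (\<lambda>i. of_bool (f i = 0))"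
  have R: "R \<in> carrier_mat d d" and Q: "Q \<in> carrier_mat d d"
    using U by (simp_all add: R_def Q_def fun_calc_carrier)
  have QQ: "mat_adjoint Q * Q = Q" and RQ: "R + Q = 1\<^sub>m d" and QP: "Q * fun_calc U d f = 0\<^sub>m d d"
    using U unfolding R_def Q_def
    by (auto simp: mat_adjoint_fun_calc fun_calc_mult fun_calc_add fun_calc_const[symmetric] intro!: fun_calc_cong)
  have "psd d Q" unfolding Q_def by (rule psd_fun_calc[OF U]) (simp add: less_eq_complex_def)
  hence "psd d (L Q)" using completely_positive_imp_psd[OF cp _ l(1)[OF Q]] by blast
  moreover have "mtrace (L Q) = 0" using tr[OF Q] QP by (simp add: mtrace_def)
  ultimately have LQ: "L (mat_adjoint Q * Q) = 0\<^sub>m d d" unfolding QQ by (rule psd_mtrace_eq_0)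
  have hQ: "mat_adjoint Q = Q"
    using U unfolding Q_def by (auto simp: mat_adjoint_fun_calc intro!: fun_calc_cong)
  have right: "L (Y * Q) = 0\<^sub>m d d" if "Y \<in> carrier_mat d d" for Y
    using completely_positive_annihilator(1)[OF cp l(1) Q that LQ] .
  have left: "L (Q * Y) = 0\<^sub>m d d" if "Y \<in> carrier_mat d d" for Y
    using completely_positive_annihilator(2)[OF cp l(1) Q _ LQ, of "mat_adjoint Y"] that hQ by simp
  have "L \<rho> = L (\<rho> * R + \<rho> * Q)"
    using \<rho> R Q by (simp add: mult_add_distrib_mat[symmetric] RQ)
  also have "\<dots> = L (\<rho> * R)" using \<rho> R Q right[OF \<rho>] l by (simp add: mult_carrier_mat[of _ d d])
  also have "\<rho> * R = (R + Q) * (\<rho> * R)" using \<rho> R by (simp add: RQ mult_carrier_mat[of _ d d])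
  also have "\<dots> = R * (\<rho> * R) + Q * (\<rho> * R)"
    using \<rho> R Q by (intro add_mult_distrib_mat[of _ d d]) (auto simp: mult_carrier_mat[of _ d d])
  also have "L \<dots> = L (R * \<rho> * R)"
    using \<rho> R Q left[of "\<rho> * R"] l by (simp add: mult_carrier_mat[of _ d d])
  finally show ?thesis .
qed

lemma sandwich_sum_is_channel:
  assumes L: "Defs.linear_map d L" and cp: "completely_positive d L"
    and P: "P \<in> carrier_mat d d" and tr: "\<And>X. X \<in> carrier_mat d d \<Longrightarrow> mtrace (L X) = mtrace (X * P)"
    and T: "T \<in> carrier_mat d d" and Q: "Q \<in> carrier_mat d d"
    and one: "T * P * mat_adjoint T + Q * mat_adjoint Q = 1\<^sub>m d"
  shows "quantum_channel d (\<lambda>X. L (mat_adjoint T * X * T) + mat_adjoint Q * X * Q)"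
  unfolding quantum_channel_def
proof (intro conjI)
  have congr_carrier: "mat_adjoint K * X * K \<in> carrier_mat d d"
    if "K \<in> carrier_mat d d" "X \<in> carrier_mat d d" for K X :: "complex mat"
    using that by (simp add: mult_carrier_mat[of _ d d])
  note l = linear_mapD[OF L]
  show "Defs.linear_map d (\<lambda>X. L (mat_adjoint T * X * T) + mat_adjoint Q * X * Q)"
    by (intro linear_map_add linear_map_comp[OF L] linear_map_congruence T Q)
  show "completely_positive d (\<lambda>X. L (mat_adjoint T * X * T) + mat_adjoint Q * X * Q)"
    using congr_carrier T Q
    by (intro completely_positive_add completely_positive_comp[OF cp] completely_positive_congruence) auto
  show "trace_preserving d (\<lambda>X. L (mat_adjoint T * X * T) + mat_adjoint Q * X * Q)"
    unfolding trace_preserving_def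
  proof
    fix X :: "complex mat" assume X: "X \<in> carrier_mat d d"
    have TXT: "mat_adjoint T * X * T \<in> carrier_mat d d" and QXQ: "mat_adjoint Q * X * Q \<in> carrier_mat d d"
      using congr_carrier T Q X by auto
    have "mtrace (L (mat_adjoint T * X * T) + mat_adjoint Q * X * Q)
        = mtrace (L (mat_adjoint T * X * T)) + mtrace (mat_adjoint Q * X * Q)"
      using l(1)[OF TXT] QXQ by (rule mtrace_add)
    also have "\<dots> = mtrace (X * (T * P * mat_adjoint T)) + mtrace (X * (Q * mat_adjoint Q))"
      using tr[OF TXT] mtrace_congruence[OF T X P] mtrace_congruence[OF Q X one_carrier_mat] Q QXQ by simp
    also have "\<dots> = mtrace (X * (T * P * mat_adjoint T) + X * (Q * mat_adjoint Q))"
      using X T P Q by (intro mtrace_add[symmetric]) (auto simp: mult_carrier_mat[of _ d d])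
    also have "X * (T * P * mat_adjoint T) + X * (Q * mat_adjoint Q) = X * (T * P * mat_adjoint T + Q * mat_adjoint Q)"
      using X T P Q by (intro mult_add_distrib_mat[symmetric]) (auto simp: mult_carrier_mat[of _ d d])
    also have "\<dots> = X" using X by (simp add: one)
    finally show "mtrace (L (mat_adjoint T * X * T) + mat_adjoint Q * X * Q) = mtrace X" .
  qed
qed

lemma extension_factorization:
  assumes qo: "quantum_operation d \<Lambda>" and ext: "is_extension d \<Lambda> \<Lambda>'"
    and U: "unitary d U" and f: "\<And>i. i < d \<Longrightarrow> 0 \<le> f i"
    and P: "1\<^sub>m d - dual_map d \<Lambda> (1\<^sub>m d) = fun_calc U d f"
  defines "S \<equiv> fun_calc U d (\<lambda>i. csqrt (f i))"
  shows "\<exists>\<Phi>. quantum_channel d \<Phi> \<and> (\<forall>\<rho> \<in> carrier_mat d d. \<Lambda>' \<rho> = \<Phi> (S * \<rho> * S))"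
proof -
  have L': "Defs.linear_map d \<Lambda>'" and cp': "completely_positive d \<Lambda>'"
    using ext by (auto simp: is_extension_def quantum_operation_def)
  have tr: "mtrace (\<Lambda>' X) = mtrace (X * fun_calc U d f)" if "X \<in> carrier_mat d d" for X
    using extension_mtrace[OF qo ext that] by (simp add: P)
  define T where "T = fun_calc U d (\<lambda>i. if f i = 0 then 0 else 1 / csqrt (f i))"
  define Q where "Q = fun_calc U d (\<lambda>i. of_bool (f i = 0))"
  define R where "R = fun_calc U d (\<lambda>i. of_bool (f i \<noteq> 0))"
  have carrier: "S \<in> carrier_mat d d" "T \<in> carrier_mat d d" "Q \<in> carrier_mat d d" "R \<in> carrier_mat d d"
    "fun_calc U d f \<in> carrier_mat d d"
    using U by (simp_all add: S_def T_def Q_def R_def fun_calc_carrier)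
  have adj: "mat_adjoint T = T" "mat_adjoint Q = Q"
    using U f unfolding T_def Q_def by (auto simp: mat_adjoint_fun_calc cnj_csqrt_nonneg intro!: fun_calc_cong)
  have mult: "T * fun_calc U d f * T + Q * Q = 1\<^sub>m d" "T * S = R" "S * T = R" "Q * S = 0\<^sub>m d d" "S * Q = 0\<^sub>m d d"
    using U f unfolding S_def T_def Q_def R_def
    by (auto simp: fun_calc_mult fun_calc_add fun_calc_const[symmetric] csqrt_mult_self intro!: fun_calc_cong)
  define \<Phi> where "\<Phi> X = \<Lambda>' (mat_adjoint T * X * T) + mat_adjoint Q * X * Q" for X
  have "quantum_channel d \<Phi>"
    unfolding \<Phi>_def using mult(1) adj carrier
    by (intro sandwich_sum_is_channel[OF L' cp' _ tr]) auto
  moreover have "\<Lambda>' \<rho> = \<Phi> (S * \<rho> * S)" if \<rho>: "\<rho> \<in> carrier_mat d d" for \<rho>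
  proof -
    note assoc = assoc_mult_mat[of _ d d _ d _ d] mult_carrier_mat[of _ d d _ d]
    have "mat_adjoint T * (S * \<rho> * S) * T = (T * S) * \<rho> * (S * T)"
      "mat_adjoint Q * (S * \<rho> * S) * Q = (Q * S) * \<rho> * (S * Q)"
      using carrier \<rho> by (simp_all add: adj assoc)
    hence "mat_adjoint T * (S * \<rho> * S) * T = R * \<rho> * R" "mat_adjoint Q * (S * \<rho> * S) * Q = 0\<^sub>m d d"
      using \<rho> by (simp_all add: mult(2-5))
    thus ?thesis
      using completely_positive_compress_to_support[OF L' cp' U f tr \<rho>] linear_mapD(1)[OF L'] carrier \<rho>
      by (simp add: \<Phi>_def R_def mult_carrier_mat[of _ d d])
  qed
  ultimately show ?thesis by blast
qed

theorem proposition1: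
  fixes d :: nat and \<Lambda> :: "complex mat \<Rightarrow> complex mat"
  assumes "d > 1" and "quantum_operation d \<Lambda>"
  shows "is_extension d \<Lambda> (min_extension d \<Lambda>) \<and>
         (\<forall>\<Lambda>'. is_extension d \<Lambda> \<Lambda>' \<longrightarrow>
            (\<exists>\<Phi>. quantum_channel d \<Phi> \<and>
                 (\<forall>\<rho> \<in> carrier_mat d d. \<Lambda>' \<rho> = \<Phi> (min_extension d \<Lambda> \<rho>))))"
proof -
  let ?G = "dual_map d \<Lambda> (1\<^sub>m d)"
  have "psd d (1\<^sub>m d - ?G)"
    using assms(2) by (simp add: quantum_operation_def trace_nonincreasing_def loewner_le_def)
  then obtain U f where U: "unitary d U" and f: "\<And>i. i < d \<Longrightarrow> 0 \<le> f i" and P: "1\<^sub>m d - ?G = fun_calc U d f"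
    using psd_spectral by blast
  define S where "S = fun_calc U d (\<lambda>i. csqrt (f i))"
  have min: "min_extension d \<Lambda> = (\<lambda>\<rho>. S * \<rho> * S)"
    by (intro ext) (simp add: min_extension_def P psd_sqrt_fun_calc[OF U f] S_def Let_def)
  have S: "S \<in> carrier_mat d d" "mat_adjoint S = S" "S * S = 1\<^sub>m d - ?G"
    using U f by (auto simp: S_def P fun_calc_carrier mat_adjoint_fun_calc cnj_csqrt_nonneg fun_calc_mult
        csqrt_mult_self intro!: fun_calc_cong)
  show ?thesis
    unfolding min
    using congruence_is_extension[OF assms(2) S] extension_factorization[OF assms(2) _ U f P]
    by (simp add: S_def)
qed

end
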